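(* Let $$\Gamma=\left\langle\mathbb{Z}^3,\left(0,\begin{pmatrix}1&-1&0\\0&-1&0\\0&0&-1\end{pmatrix}\right)\right\rangle\subseteq\mathrm{Aff}(\mathbb{R}^3).$$ Then $\mathrm{Spec}_R(\Gamma)=4\mathbb{N}\cup\{\infty\}$.
   Context: $\mathrm{Aff}(\mathbb{R}^3)=\mathbb{R}^3\rtimes\mathrm{GL}_3(\mathbb{R})$ with multiplication $(d_1,D_1)(d_2,D_2)=(d_1+D_1d_2,D_1D_2)$; $\mathbb{Z}^3$ denotes $\{(z,I_3)\mid z\in\mathbb{Z}^3\}$. $\mathbb{N}=\{1,2,3,\dots\}$, $4\mathbb{N}=\{4,8,12,\dots\}$. For an automorphism $\varphi$ of a group $G$, $R(\varphi)\in\mathbb{N}\cup\{\infty\}$ is the number of classes of the relation $g\sim g'\iff\exists h\in G: g=hg'\varphi(h)^{-1}$, and $\mathrm{Spec}_R(G)=\{R(\varphi)\mid\varphi\in\mathrm{Aut}(G)\}$. *)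

theory Defs
  imports "HOL-Analysis.Analysis" "HOL-Algebra.Generated_Groups" "HOL-Library.Extended_Nat"
begin

definition aff_mult :: "((real^3) \<times> (real^3^3)) \<Rightarrow> ((real^3) \<times> (real^3^3)) \<Rightarrow> ((real^3) \<times> (real^3^3))" where
  "aff_mult p q = (fst p + (snd p *v fst q), snd p ** snd q)"

definition Aff3 :: "((real^3) \<times> (real^3^3)) monoid" where
  "Aff3 = \<lparr> carrier = {p. invertible (snd p)}, mult = aff_mult, one = (0, mat 1) \<rparr>"

definition Z3 :: "((real^3) \<times> (real^3^3)) set" where
  "Z3 = {((\<chi> i. of_int (z i)), mat 1) | z :: 3 \<Rightarrow> int. True}"

definition A_mat :: "real^3^3" where
  "A_mat = vector [vector [1, -1, 0], vector [0, -1, 0], vector [0, 0, -1]]"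

definition Gamma :: "((real^3) \<times> (real^3^3)) monoid" where
  "Gamma = Aff3\<lparr> carrier := generate Aff3 (Z3 \<union> {(0, A_mat)}) \<rparr>"

definition reid_rel :: "('a, 'b) monoid_scheme \<Rightarrow> ('a \<Rightarrow> 'a) \<Rightarrow> ('a \<times> 'a) set" where
  "reid_rel G \<phi> = {(g, g'). g \<in> carrier G \<and> g' \<in> carrier G \<and>
     (\<exists>h \<in> carrier G. g = h \<otimes>\<^bsub>G\<^esub> g' \<otimes>\<^bsub>G\<^esub> inv\<^bsub>G\<^esub> (\<phi> h))}"

definition reidemeister_number :: "('a, 'b) monoid_scheme \<Rightarrow> ('a \<Rightarrow> 'a) \<Rightarrow> enat" where
  "reidemeister_number G \<phi> =
     (if finite (carrier G // reid_rel G \<phi>) then enat (card (carrier G // reid_rel G \<phi>)) else \<infinity>)"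

definition reidemeister_spectrum :: "('a, 'b) monoid_scheme \<Rightarrow> enat set" where
  "reidemeister_spectrum G = {reidemeister_number G \<phi> | \<phi>. \<phi> \<in> iso G G}"

end

(*
  In the coordinates (u, w, t) |-> (-t, u, w) the matrix A acts on Z^3 as
  sigma (u, w, t) = (-u, -w, u + t), so Gamma is the semidirect product Model of Z^3 and Z/2.
  An element of Model is a translation iff it commutes with all its conjugates, so every
  automorphism preserves the translations and is affine: a linear part lin a b c mu nu commuting
  with sigma and a translation part.  Surjectivity forces a = +-1 and
  q = (a - 2b) nu + 2 c mu = +-1.

  Twisted conjugacy preserves the two cosets of Z^3.  For a = 1 the quantity u + 2t is invariant
  and takes infinitely many values, so R = infinity.  For a = -1 (hence nu = 2n + 1 odd), on each
  coset z ~ z' iff z - z' or z - rho z' lies in the lattice L = (id - lin) Z^3, where rho is an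
  affine involution.  If det (id - lin) = 2 D is nonzero, Z^3 / L has 2 |D| elements and the classes
  are the rho-orbits on Z^3 / L, of which there are |D| plus half the number of fixed points;
  there are 4 fixed points if the translation part has even second coordinate, and none
  otherwise.  Adding both cosets, R = |D0| + |D1| + (4 or 0), and as D0, D1 are even,
  |D0| + |D1| = D0 + D1 = 2 q + 2 = 0 (mod 4).  If D0 = 0 or D1 = 0, a linear form vanishing on
  L gives an infinite invariant.  The automorphisms with b = c = -k, mu = nu = 1 and translation
  part (0, 1, 0) have R = 4 k.
*)

theory Submission
  imports Defs
begin

section \<open>Counting the classes of an equivalence relation\<close>

lemma quotient_eq_image_fibres:
  assumes "r \<subseteq> A \<times> A" and "\<And>a b. a \<in> A \<Longrightarrow> b \<in> A \<Longrightarrow> (a, b) \<in> r \<longleftrightarrow> f a = f b"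
  shows "A // r = (\<lambda>y. {a \<in> A. f a = y}) ` f ` A"
proof -
  have "r `` {a} = {b \<in> A. f b = f a}" if "a \<in> A" for a
    using assms that by auto
  then show ?thesis
    unfolding quotient_def by (auto simp: image_iff)
qed

lemma
  assumes "r \<subseteq> A \<times> A" and "\<And>a b. a \<in> A \<Longrightarrow> b \<in> A \<Longrightarrow> (a, b) \<in> r \<longleftrightarrow> f a = f b"
  shows card_quotient_eq_card_image: "card (A // r) = card (f ` A)"
    and finite_quotient_iff_finite_image: "finite (A // r) \<longleftrightarrow> finite (f ` A)"
proof -
  have "inj_on (\<lambda>y. {a \<in> A. f a = y}) (f ` A)"
    by (auto simp: inj_on_def)
  then show "card (A // r) = card (f ` A)" "finite (A // r) \<longleftrightarrow> finite (f ` A)"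
    using quotient_eq_image_fibres[OF assms] by (simp_all add: card_image finite_image_iff)
qed

lemma infinite_quotient_if_infinite_invariant:
  assumes "\<And>a. a \<in> A \<Longrightarrow> (a, a) \<in> r" and "\<And>a b. (a, b) \<in> r \<Longrightarrow> f a = f b"
    and "infinite (f ` A)"
  shows "infinite (A // r)"
proof
  assume "finite (A // r)"
  moreover have "f ` A \<subseteq> (\<lambda>C. the_elem (f ` C)) ` (A // r)"
  proof
    fix y assume "y \<in> f ` A"
    then obtain a where a: "a \<in> A" "y = f a" by auto
    then have "f ` (r `` {a}) = {y}"
      using assms(1,2) by force
    then show "y \<in> (\<lambda>C. the_elem (f ` C)) ` (A // r)"
      using quotientI[OF a(1)] by (metis image_eqI the_elem_eq)
  qed
  ultimately show False
    using assms(3) finite_subset by blast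
qed

lemma involution_orbits_disjoint:
  assumes "\<And>y. y \<in> Y \<Longrightarrow> s (s y) = y" and "y \<in> Y" "y' \<in> Y" and "{y, s y} \<noteq> {y', s y'}"
  shows "{y, s y} \<inter> {y', s y'} = {}"
proof (rule ccontr)
  assume "{y, s y} \<inter> {y', s y'} \<noteq> {}"
  then obtain z where "z \<in> {y, s y}" "z \<in> {y', s y'}"
    by blast
  moreover have "{x, s x} = {z, s z}" if "s (s x) = x" "z \<in> {x, s x}" for x
    using that by auto
  ultimately have "{y, s y} = {z, s z}" "{y', s y'} = {z, s z}"
    using assms(1)[OF assms(2)] assms(1)[OF assms(3)] by blast+
  then show False
    using assms(4) by simp
qed

lemma card_involution_orbits:
  assumes "finite Y" and "\<And>y. y \<in> Y \<Longrightarrow> s y \<in> Y" and "\<And>y. y \<in> Y \<Longrightarrow> s (s y) = y"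
  shows "2 * card ((\<lambda>y. {y, s y}) ` Y) = card Y + card {y \<in> Y. s y = y}"
proof -
  define P where "P = (\<lambda>y. {y, s y}) ` Y"
  have finite_P: "finite P" and finite_orbits: "\<forall>C \<in> P. finite C"
    using assms(1) unfolding P_def by auto
  have card_UN: "card (\<Union>C \<in> P. g C) = (\<Sum>C \<in> P. card (g C))" if sub: "\<And>C. g C \<subseteq> C" for g
  proof (rule card_UN_disjoint[OF finite_P])
    show "\<forall>C \<in> P. finite (g C)"
      using finite_orbits sub finite_subset by blast
    show "\<forall>C \<in> P. \<forall>C' \<in> P. C \<noteq> C' \<longrightarrow> g C \<inter> g C' = {}"
    proof (intro ballI impI)
      fix C C' assume "C \<in> P" "C' \<in> P" "C \<noteq> C'"
      moreover obtain y y' where "y \<in> Y" "C = {y, s y}" "y' \<in> Y" "C' = {y', s y'}"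
        using \<open>C \<in> P\<close> \<open>C' \<in> P\<close> unfolding P_def by blast
      ultimately have "C \<inter> C' = {}"
        using involution_orbits_disjoint[OF assms(3)] by simp
      then show "g C \<inter> g C' = {}"
        using sub[of C] sub[of C'] by blast
    qed
  qed
  have "(\<Union>C \<in> P. C) = Y" and "(\<Union>C \<in> P. {y \<in> C. s y = y}) = {y \<in> Y. s y = y}"
    unfolding P_def using assms(2) by auto
  then have "card Y + card {y \<in> Y. s y = y} = (\<Sum>C \<in> P. card C + card {y \<in> C. s y = y})"
    using card_UN[of id] card_UN[of "\<lambda>C. {y \<in> C. s y = y}"] by (simp add: sum.distrib)
  also have "\<dots> = (\<Sum>C \<in> P. 2)"
  proof (rule sum.cong)
    fix C assume "C \<in> P"
    then obtain y where C: "C = {y, s y}" "y \<in> Y" unfolding P_def by blast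
    show "card C + card {x \<in> C. s x = x} = 2"
    proof (cases "s y = y")
      case True
      then have "C = {y}" "{x \<in> C. s x = x} = {y}" using C by auto
      then show ?thesis by simp
    next
      case False
      then have "{x \<in> C. s x = x} = {}" using C assms(3) by force
      then show ?thesis using C False by simp
    qed
  qed simp
  finally show ?thesis
    unfolding P_def by simp
qed

lemma doubleton_classes_eq_iff:
  assumes "\<And>z z'. \<kappa> z = \<kappa> z' \<Longrightarrow> \<kappa> (s z) = \<kappa> (s z')" and "\<And>z. s (s z) = z"
  shows "{\<kappa> z, \<kappa> (s z)} = {\<kappa> z', \<kappa> (s z')} \<longleftrightarrow> \<kappa> z = \<kappa> z' \<or> \<kappa> z = \<kappa> (s z')"
proof
  assume "\<kappa> z = \<kappa> z' \<or> \<kappa> z = \<kappa> (s z')"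
  then show "{\<kappa> z, \<kappa> (s z)} = {\<kappa> z', \<kappa> (s z')}"
    using assms(1)[of z z'] assms(1)[of z "s z'"] assms(2)[of z'] by auto
qed (metis doubleton_eq_iff)

lemma range_doubleton_classes:
  assumes "\<And>z. \<kappa> (\<kappa> z) = \<kappa> z" and "\<And>z z'. \<kappa> z = \<kappa> z' \<Longrightarrow> \<kappa> (s z) = \<kappa> (s z')"
  shows "range (\<lambda>z. {\<kappa> z, \<kappa> (s z)}) = (\<lambda>r. {r, \<kappa> (s r)}) ` range \<kappa>"
proof -
  have "\<kappa> (s (\<kappa> z)) = \<kappa> (s z)" for z
    using assms by metis
  then show ?thesis
    by (simp add: image_image)
qed

lemma card_doubleton_classes:
  assumes "finite (range \<kappa>)" and "\<And>z. \<kappa> (\<kappa> z) = \<kappa> z"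
    and "\<And>z z'. \<kappa> z = \<kappa> z' \<Longrightarrow> \<kappa> (s z) = \<kappa> (s z')" and "\<And>z. s (s z) = z"
  shows "2 * card (range (\<lambda>z. {\<kappa> z, \<kappa> (s z)})) = card (range \<kappa>) + card {r \<in> range \<kappa>. \<kappa> (s r) = r}"
proof -
  have "\<kappa> (s (\<kappa> (s r))) = r" if "r \<in> range \<kappa>" for r
    using that assms(2-4) by (metis rangeE)
  then show ?thesis
    using card_involution_orbits[OF assms(1), of "\<lambda>r. \<kappa> (s r)"]
    by (simp add: range_doubleton_classes[of \<kappa> s, OF assms(2,3)])
qed

section \<open>Reidemeister numbers and group isomorphisms\<close>

lemma (in group) reid_rel_equiv:
  assumes "\<phi> \<in> hom G G"
  shows "equiv (carrier G) (reid_rel G \<phi>)"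
proof -
  interpret group_hom G G \<phi>
    using assms by (simp add: group_hom_def group_hom_axioms_def is_group)
  show ?thesis
  proof (rule equivI)
    show "refl_on (carrier G) (reid_rel G \<phi>)"
      unfolding refl_on_def reid_rel_def by (auto intro!: bexI[of _ \<one>])
    show "sym (reid_rel G \<phi>)"
    proof (rule symI)
      fix a b assume "(a, b) \<in> reid_rel G \<phi>"
      then obtain h where h: "a \<in> carrier G" "b \<in> carrier G" "h \<in> carrier G"
        "a = h \<otimes> b \<otimes> inv (\<phi> h)"
        unfolding reid_rel_def by auto
      then have "b = inv h \<otimes> a \<otimes> inv (\<phi> (inv h))"
        by (simp add: m_assoc hom_inv inv_solve_left)
      then show "(b, a) \<in> reid_rel G \<phi>"
        unfolding reid_rel_def using h by blast
    qed
    show "trans (reid_rel G \<phi>)"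
    proof (rule transI)
      fix a b c assume "(a, b) \<in> reid_rel G \<phi>" "(b, c) \<in> reid_rel G \<phi>"
      then obtain h k where hk: "a \<in> carrier G" "c \<in> carrier G" "h \<in> carrier G" "k \<in> carrier G"
        "a = h \<otimes> b \<otimes> inv (\<phi> h)" "b = k \<otimes> c \<otimes> inv (\<phi> k)"
        unfolding reid_rel_def by auto
      then have "a = (h \<otimes> k) \<otimes> c \<otimes> inv (\<phi> (h \<otimes> k))"
        by (simp add: m_assoc inv_mult_group)
      then show "(a, c) \<in> reid_rel G \<phi>"
        unfolding reid_rel_def using hk by blast
    qed
  qed (auto simp: reid_rel_def)
qed

lemma reid_rel_iso_iff:
  assumes "group K" "group G" and F: "F \<in> iso K G"
    and \<phi>: "\<phi> \<in> hom K K" and conj: "\<And>h. h \<in> carrier K \<Longrightarrow> F (\<phi> h) = \<psi> (F h)"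
    and ab: "a \<in> carrier K" "b \<in> carrier K"
  shows "(a, b) \<in> reid_rel K \<phi> \<longleftrightarrow> (F a, F b) \<in> reid_rel G \<psi>"
proof -
  interpret K: group K by fact
  interpret F: group_hom K G F
    using assms F by (simp add: group_hom_def group_hom_axioms_def iso_def)
  have bij: "bij_betw F (carrier K) (carrier G)"
    using F by (simp add: iso_def)
  have \<phi>_closed: "\<phi> h \<in> carrier K" if "h \<in> carrier K" for h
    using \<phi> that by (simp add: hom_def Pi_def)
  have image: "F (h \<otimes>\<^bsub>K\<^esub> b \<otimes>\<^bsub>K\<^esub> inv\<^bsub>K\<^esub> (\<phi> h)) = F h \<otimes>\<^bsub>G\<^esub> F b \<otimes>\<^bsub>G\<^esub> inv\<^bsub>G\<^esub> (\<psi> (F h))"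
    if "h \<in> carrier K" for h
    using that ab by (simp add: \<phi>_closed conj)
  have "a = h \<otimes>\<^bsub>K\<^esub> b \<otimes>\<^bsub>K\<^esub> inv\<^bsub>K\<^esub> (\<phi> h) \<longleftrightarrow> F a = F h \<otimes>\<^bsub>G\<^esub> F b \<otimes>\<^bsub>G\<^esub> inv\<^bsub>G\<^esub> (\<psi> (F h))"
    if "h \<in> carrier K" for h
  proof -
    have "h \<otimes>\<^bsub>K\<^esub> b \<otimes>\<^bsub>K\<^esub> inv\<^bsub>K\<^esub> (\<phi> h) \<in> carrier K"
      using that ab \<phi>_closed by simp
    then have "a = h \<otimes>\<^bsub>K\<^esub> b \<otimes>\<^bsub>K\<^esub> inv\<^bsub>K\<^esub> (\<phi> h) \<longleftrightarrow> F a = F (h \<otimes>\<^bsub>K\<^esub> b \<otimes>\<^bsub>K\<^esub> inv\<^bsub>K\<^esub> (\<phi> h))"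
      using inj_on_eq_iff[OF bij_betw_imp_inj_on[OF bij] ab(1)] by simp
    also have "\<dots> \<longleftrightarrow> F a = F h \<otimes>\<^bsub>G\<^esub> F b \<otimes>\<^bsub>G\<^esub> inv\<^bsub>G\<^esub> (\<psi> (F h))"
      by (simp only: image[OF that])
    finally show ?thesis .
  qed
  then have "(a, b) \<in> reid_rel K \<phi> \<longleftrightarrow> (\<exists>h' \<in> F ` carrier K. F a = h' \<otimes>\<^bsub>G\<^esub> F b \<otimes>\<^bsub>G\<^esub> inv\<^bsub>G\<^esub> (\<psi> h'))"
    using ab by (auto simp: reid_rel_def)
  also have "\<dots> \<longleftrightarrow> (F a, F b) \<in> reid_rel G \<psi>"
    using ab bij by (auto simp: reid_rel_def bij_betw_def)
  finally show ?thesis .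
qed

lemma reidemeister_number_iso_conj:
  assumes K: "group K" and G: "group G" and F: "F \<in> iso K G"
    and \<phi>: "\<phi> \<in> hom K K" and \<psi>: "\<psi> \<in> hom G G"
    and conj: "\<And>h. h \<in> carrier K \<Longrightarrow> F (\<phi> h) = \<psi> (F h)"
  shows "reidemeister_number K \<phi> = reidemeister_number G \<psi>"
proof -
  have onto: "F ` carrier K = carrier G"
    using F by (simp add: iso_def bij_betw_def)
  have equiv: "equiv (carrier G) (reid_rel G \<psi>)"
    using group.reid_rel_equiv[OF G \<psi>] .
  define cls where "cls a = reid_rel G \<psi> `` {F a}" for a
  have "(a, b) \<in> reid_rel K \<phi> \<longleftrightarrow> cls a = cls b" if "a \<in> carrier K" "b \<in> carrier K" for a b
    using reid_rel_iso_iff[OF K G F \<phi> conj that] equiv_class_eq_iff[OF equiv, of "F a" "F b"] that onto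
    unfolding cls_def by blast
  moreover have "cls ` carrier K = carrier G // reid_rel G \<psi>"
    unfolding cls_def quotient_def by (simp add: image_UN image_image flip: onto) blast
  moreover have "reid_rel K \<phi> \<subseteq> carrier K \<times> carrier K"
    by (auto simp: reid_rel_def)
  ultimately show ?thesis
    unfolding reidemeister_number_def
    by (simp add: card_quotient_eq_card_image finite_quotient_iff_finite_image)
qed

lemma reidemeister_spectrum_subset_iso:
  assumes K: "group K" and G: "group G" and F: "F \<in> iso K G"
  shows "reidemeister_spectrum G \<subseteq> reidemeister_spectrum K"
proof
  fix x assume "x \<in> reidemeister_spectrum G"
  then obtain \<psi> where \<psi>: "\<psi> \<in> iso G G" and x: "x = reidemeister_number G \<psi>"
    unfolding reidemeister_spectrum_def by auto
  define F' where "F' = inv_into (carrier K) F"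
  have F': "F' \<in> iso G K"
    unfolding F'_def using group.iso_set_sym[OF K F] .
  define \<phi> where "\<phi> = F' \<circ> \<psi> \<circ> F"
  have \<phi>: "\<phi> \<in> iso K K"
    unfolding \<phi>_def by (intro iso_set_trans[OF F iso_set_trans[OF \<psi> F']])
  have "F (\<phi> h) = \<psi> (F h)" if "h \<in> carrier K" for h
  proof -
    have "\<psi> (F h) \<in> carrier G"
      using that F \<psi> by (auto simp: iso_def hom_def Pi_def)
    moreover have "bij_betw F (carrier K) (carrier G)"
      using F by (simp add: iso_def)
    ultimately show ?thesis
      unfolding \<phi>_def F'_def by (simp add: bij_betw_inv_into_right)
  qed
  then have "x = reidemeister_number K \<phi>"
    using reidemeister_number_iso_conj[OF K G F] \<phi> \<psi> x by (metis iso_imp_homomorphism)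
  then show "x \<in> reidemeister_spectrum K"
    unfolding reidemeister_spectrum_def using \<phi> by blast
qed

lemma reidemeister_spectrum_iso_eq:
  assumes "group K" "group G" "F \<in> iso K G"
  shows "reidemeister_spectrum G = reidemeister_spectrum K"
  using reidemeister_spectrum_subset_iso[OF assms]
    reidemeister_spectrum_subset_iso[OF assms(2,1) group.iso_set_sym[OF assms(1,3)]]
  by blast

section \<open>A sublattice of \<open>\<int>\<^sup>3\<close> and its index\<close>

definition lattice3 :: "int \<Rightarrow> int \<Rightarrow> int \<Rightarrow> int \<Rightarrow> int \<Rightarrow> int \<Rightarrow> (int \<times> int \<times> int) set" where
  "lattice3 B11 B12 B21 B22 l1 l2 =
     {(B11 * a1 + B12 * a2, B21 * a1 + B22 * a2, l1 * a1 + l2 * a2 + 2 * \<tau>) | a1 a2 \<tau>. True}"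

lemma lattice3I:
  "(B11 * a1 + B12 * a2, B21 * a1 + B22 * a2, l1 * a1 + l2 * a2 + 2 * \<tau>) \<in> lattice3 B11 B12 B21 B22 l1 l2"
  unfolding lattice3_def by blast

lemma lattice3E:
  assumes "z \<in> lattice3 B11 B12 B21 B22 l1 l2"
  obtains a1 a2 \<tau> where "z = (B11 * a1 + B12 * a2, B21 * a1 + B22 * a2, l1 * a1 + l2 * a2 + 2 * \<tau>)"
  using assms unfolding lattice3_def by blast

lemma lattice3_add:
  assumes "z \<in> lattice3 B11 B12 B21 B22 l1 l2" "z' \<in> lattice3 B11 B12 B21 B22 l1 l2"
  shows "z + z' \<in> lattice3 B11 B12 B21 B22 l1 l2"
proof -
  obtain a1 a2 \<tau> a1' a2' \<tau>' where
    "z = (B11 * a1 + B12 * a2, B21 * a1 + B22 * a2, l1 * a1 + l2 * a2 + 2 * \<tau>)"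
    "z' = (B11 * a1' + B12 * a2', B21 * a1' + B22 * a2', l1 * a1' + l2 * a2' + 2 * \<tau>')"
    using assms by (metis lattice3E)
  then have "z + z' = (B11 * (a1 + a1') + B12 * (a2 + a2'), B21 * (a1 + a1') + B22 * (a2 + a2'),
      l1 * (a1 + a1') + l2 * (a2 + a2') + 2 * (\<tau> + \<tau>'))"
    by (simp add: algebra_simps)
  then show ?thesis
    by (simp only: lattice3I)
qed

lemma lattice3_uminus:
  assumes "z \<in> lattice3 B11 B12 B21 B22 l1 l2"
  shows "- z \<in> lattice3 B11 B12 B21 B22 l1 l2"
proof -
  obtain a1 a2 \<tau> where "z = (B11 * a1 + B12 * a2, B21 * a1 + B22 * a2, l1 * a1 + l2 * a2 + 2 * \<tau>)"
    using assms by (rule lattice3E)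
  then have "- z = (B11 * - a1 + B12 * - a2, B21 * - a1 + B22 * - a2, l1 * - a1 + l2 * - a2 + 2 * - \<tau>)"
    by simp
  then show ?thesis
    by (simp only: lattice3I)
qed

lemma lattice3_diff:
  assumes "z \<in> lattice3 B11 B12 B21 B22 l1 l2" "z' \<in> lattice3 B11 B12 B21 B22 l1 l2"
  shows "z - z' \<in> lattice3 B11 B12 B21 B22 l1 l2"
  using lattice3_add[OF assms(1) lattice3_uminus[OF assms(2)]] by simp

lemma zero_if_abs_mult_less:
  fixes g k :: int
  assumes "0 < g" "\<bar>g * k\<bar> < g"
  shows "k = 0"
proof (rule ccontr)
  assume "k \<noteq> 0"
  then have "g * 1 \<le> g * \<bar>k\<bar>"
    using assms(1) by (intro mult_left_mono) auto
  then show False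
    using assms by (simp add: abs_mult)
qed

text \<open>Reduction modulo \<open>lattice3\<close> to a cell of side lengths \<open>g\<close>, \<open>\<bar>y\<bar>\<close> and \<open>2\<close>, where
  \<open>g = gcd B11 B12\<close> and \<open>g * y\<close> is the determinant: first \<open>u\<close> is reduced modulo \<open>g\<close>,
  then \<open>w\<close> modulo \<open>\<bar>y\<bar>\<close> and finally \<open>t\<close> modulo \<open>2\<close>, each time subtracting
  a lattice vector.\<close>

locale lattice3_reduction =
  fixes B11 B12 B21 B22 l1 l2 g p1 p2 s t :: int
  assumes g_pos: "0 < g" and B11_eq: "B11 = g * p1" and B12_eq: "B12 = g * p2"
    and bezout: "s * p1 + t * p2 = 1"
    and det_nonzero: "B11 * B22 - B12 * B21 \<noteq> 0"
begin

definition "x = B21 * s + B22 * t"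
definition "y = B22 * p1 - B21 * p2"
definition "lam1 = l1 * s + l2 * t"
definition "lam2 = l2 * p1 - l1 * p2"

abbreviation "L \<equiv> lattice3 B11 B12 B21 B22 l1 l2"

lemma det_eq: "B11 * B22 - B12 * B21 = g * y"
  unfolding y_def B11_eq B12_eq by (simp add: algebra_simps)

lemma abs_y_pos: "0 < \<bar>y\<bar>"
  using det_eq det_nonzero by auto

definition reduce :: "int \<times> int \<times> int \<Rightarrow> int \<times> int \<times> int" where
  "reduce = (\<lambda>(u, w, t0). (u mod g, (w - x * (u div g)) mod \<bar>y\<bar>,
      (t0 - lam1 * (u div g) - lam2 * (((w - x * (u div g)) div \<bar>y\<bar>) * sgn y)) mod 2))"

definition "cell = {0..<g} \<times> {0..<\<bar>y\<bar>} \<times> {0..<(2::int)}"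

lemma finite_cell: "finite cell"
  unfolding cell_def by simp

lemma card_cell: "card cell = 2 * nat \<bar>B11 * B22 - B12 * B21\<bar>"
  using g_pos abs_y_pos
  by (simp add: cell_def det_eq card_cartesian_product abs_mult nat_mult_distrib)

lemma reduce_in_cell: "reduce z \<in> cell"
  unfolding cell_def reduce_def using g_pos abs_y_pos by (cases z) auto

lemma reduce_cell: "r \<in> cell \<Longrightarrow> reduce r = r"
  unfolding cell_def reduce_def by (cases r) auto

lemma diff_reduce_in_lattice: "z - reduce z \<in> L"
proof -
  obtain u w t0 where z: "z = (u, w, t0)" by (cases z)
  define k where "k = u div g"
  define l where "l = ((w - x * k) div \<bar>y\<bar>) * sgn y"
  define \<tau> where "\<tau> = (t0 - lam1 * k - lam2 * l) div 2"
  define a1 where "a1 = s * k - p2 * l"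
  define a2 where "a2 = t * k + p1 * l"
  have "u - u mod g = g * k * (s * p1 + t * p2)"
    unfolding k_def bezout by (simp add: minus_mod_eq_mult_div)
  also have "\<dots> = B11 * a1 + B12 * a2"
    unfolding a1_def a2_def B11_eq B12_eq by (simp add: algebra_simps)
  finally have 1: "u - u mod g = B11 * a1 + B12 * a2" .
  have "y * l = \<bar>y\<bar> * ((w - x * k) div \<bar>y\<bar>)"
    unfolding l_def by (simp add: sgn_if)
  then have "w - (w - x * k) mod \<bar>y\<bar> = x * k + y * l"
    by (simp add: minus_mod_eq_mult_div[symmetric] algebra_simps)
  also have "\<dots> = B21 * a1 + B22 * a2"
    unfolding x_def y_def a1_def a2_def using bezout by (simp add: algebra_simps)
  finally have 2: "w - (w - x * k) mod \<bar>y\<bar> = B21 * a1 + B22 * a2" .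
  have "t0 - (t0 - lam1 * k - lam2 * l) mod 2 = lam1 * k + lam2 * l + 2 * \<tau>"
    unfolding \<tau>_def by (simp add: minus_mod_eq_mult_div[symmetric] algebra_simps)
  also have "lam1 * k + lam2 * l = l1 * a1 + l2 * a2"
    unfolding lam1_def lam2_def a1_def a2_def by (simp add: algebra_simps)
  finally have 3: "t0 - (t0 - lam1 * k - lam2 * l) mod 2 = l1 * a1 + l2 * a2 + 2 * \<tau>" .
  have "z - reduce z = (B11 * a1 + B12 * a2, B21 * a1 + B22 * a2, l1 * a1 + l2 * a2 + 2 * \<tau>)"
    using 1 2 3 unfolding z reduce_def k_def l_def by simp
  then show ?thesis
    by (simp only: lattice3I)
qed

lemma cell_eq_if_diff_in_lattice:
  assumes "r \<in> cell" "r' \<in> cell" "r - r' \<in> L"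
  shows "r = r'"
proof -
  obtain u w t0 u' w' t0' where r: "r = (u, w, t0)" and r': "r' = (u', w', t0')"
    by (cases r, cases r')
  have bounds: "0 \<le> u" "u < g" "0 \<le> w" "w < \<bar>y\<bar>" "0 \<le> t0" "t0 < 2"
    "0 \<le> u'" "u' < g" "0 \<le> w'" "w' < \<bar>y\<bar>" "0 \<le> t0'" "t0' < 2"
    using assms(1,2) unfolding r r' cell_def by auto
  obtain a1 a2 \<tau> where
    "r - r' = (B11 * a1 + B12 * a2, B21 * a1 + B22 * a2, l1 * a1 + l2 * a2 + 2 * \<tau>)"
    using assms(3) by (rule lattice3E)
  then have du: "u - u' = B11 * a1 + B12 * a2" and dw: "w - w' = B21 * a1 + B22 * a2"
    and dt: "t0 - t0' = l1 * a1 + l2 * a2 + 2 * \<tau>"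
    unfolding r r' by auto
  define k where "k = p1 * a1 + p2 * a2"
  define l where "l = - t * a1 + s * a2"
  have "s * k - p2 * l = a1 * (s * p1 + t * p2)" "t * k + p1 * l = a2 * (s * p1 + t * p2)"
    unfolding k_def l_def by (simp_all add: algebra_simps)
  then have a1: "a1 = s * k - p2 * l" and a2: "a2 = t * k + p1 * l"
    by (simp_all add: bezout)
  have "u - u' = g * k"
    using du unfolding B11_eq B12_eq k_def by (simp add: algebra_simps)
  then have "\<bar>g * k\<bar> < g"
    unfolding abs_less_iff using bounds by linarith
  then have k0: "k = 0"
    using zero_if_abs_mult_less g_pos by blast
  have "w - w' = y * l"
    using dw a1 a2 k0 unfolding y_def by (simp add: algebra_simps)
  then have "\<bar>\<bar>y\<bar> * l\<bar> < \<bar>y\<bar>"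
    unfolding abs_mult abs_abs abs_less_iff using bounds by (simp add: abs_mult)
  then have "l = 0"
    using zero_if_abs_mult_less abs_y_pos by blast
  then have "a1 = 0" "a2 = 0"
    using a1 a2 k0 by simp_all
  then have "u = u'" "w = w'" "t0 - t0' = 2 * \<tau>"
    using du dw dt by simp_all
  moreover have "\<bar>2 * \<tau>\<bar> < 2"
    using \<open>t0 - t0' = 2 * \<tau>\<close> bounds unfolding abs_less_iff by linarith
  then have "\<tau> = 0"
    by (rule zero_if_abs_mult_less[of 2 \<tau>, rotated]) simp
  then have "t0 = t0'"
    using \<open>t0 - t0' = 2 * \<tau>\<close> by simp
  ultimately show ?thesis
    unfolding r r' by simp
qed

lemma reduce_eq_iff: "reduce z = reduce z' \<longleftrightarrow> z - z' \<in> L"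
proof
  assume "reduce z = reduce z'"
  then have "z - z' = (z - reduce z) - (z' - reduce z')"
    by simp
  then show "z - z' \<in> L"
    using lattice3_diff[OF diff_reduce_in_lattice[of z] diff_reduce_in_lattice[of z']] by simp
next
  assume "z - z' \<in> L"
  have "reduce z - reduce z' = (z - z') - (z - reduce z) + (z' - reduce z')"
    by simp
  also have "\<dots> \<in> L"
    by (intro lattice3_add lattice3_diff \<open>z - z' \<in> L\<close> diff_reduce_in_lattice)
  finally have "reduce z - reduce z' \<in> L" .
  then show "reduce z = reduce z'"
    using cell_eq_if_diff_in_lattice reduce_in_cell by blast
qed

end

lemma lattice3_normal_form:
  fixes B11 B12 B21 B22 l1 l2 :: int
  assumes "B11 * B22 - B12 * B21 \<noteq> 0"
  obtains \<kappa> :: "int \<times> int \<times> int \<Rightarrow> int \<times> int \<times> int" and R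
  where "finite R" "card R = 2 * nat \<bar>B11 * B22 - B12 * B21\<bar>"
    "\<And>z. \<kappa> z \<in> R" "\<And>r. r \<in> R \<Longrightarrow> \<kappa> r = r"
    "\<And>z z'. \<kappa> z = \<kappa> z' \<longleftrightarrow> z - z' \<in> lattice3 B11 B12 B21 B22 l1 l2"
proof -
  define g where "g = gcd B11 B12"
  obtain p1 p2 where "B11 = g * p1" "B12 = g * p2"
    unfolding g_def by (metis dvd_def gcd_dvd1 gcd_dvd2)
  moreover obtain s t where "s * B11 + t * B12 = g"
    unfolding g_def using bezout_int by blast
  moreover have "0 < g"
    using assms unfolding g_def by auto
  ultimately have "g * (s * p1 + t * p2) = g * 1"
    by (simp add: algebra_simps)
  then have "s * p1 + t * p2 = 1"
    using \<open>0 < g\<close> by simp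
  with \<open>0 < g\<close> \<open>B11 = g * p1\<close> \<open>B12 = g * p2\<close> assms
  interpret lattice3_reduction B11 B12 B21 B22 l1 l2 g p1 p2 s t
    by unfold_locales
  show ?thesis
    using that[OF finite_cell card_cell reduce_in_cell reduce_cell reduce_eq_iff] .
qed

section \<open>The model group and its affine automorphisms\<close>

type_synonym elt = "(int \<times> int \<times> int) \<times> bool"

definition sigma :: "int \<times> int \<times> int \<Rightarrow> int \<times> int \<times> int" where
  "sigma = (\<lambda>(u, w, t). (- u, - w, u + t))"

lemma sigma_simp [simp]: "sigma (u, w, t) = (- u, - w, u + t)"
  by (simp add: sigma_def)

lemma sigma_add: "sigma (x + y) = sigma x + sigma y"
  by (cases x, cases y) simp

lemma sigma_uminus: "sigma (- x) = - sigma x"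
  by (cases x) simp

lemma sigma_diff: "sigma (x - y) = sigma x - sigma y"
  by (cases x, cases y) simp

lemma sigma_sigma [simp]: "sigma (sigma x) = x"
  by (cases x) simp

lemma sigma_zero [simp]: "sigma 0 = 0"
  by (simp add: zero_prod_def)

definition model_mult :: "elt \<Rightarrow> elt \<Rightarrow> elt" where
  "model_mult g h = (fst g + (if snd g then sigma (fst h) else fst h), snd g \<noteq> snd h)"

definition model_inv :: "elt \<Rightarrow> elt" where
  "model_inv g = (if snd g then - sigma (fst g) else - fst g, snd g)"

definition Model :: "elt monoid" where
  "Model = \<lparr>carrier = UNIV, mult = model_mult, one = (0, False)\<rparr>"

lemma Model_simps [simp]: "carrier Model = UNIV" "mult Model = model_mult" "one Model = (0, False)"
  by (simp_all add: Model_def)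

lemma group_Model: "group Model"
proof (rule groupI)
  fix x y z :: elt
  show "x \<otimes>\<^bsub>Model\<^esub> y \<otimes>\<^bsub>Model\<^esub> z = x \<otimes>\<^bsub>Model\<^esub> (y \<otimes>\<^bsub>Model\<^esub> z)"
    by (cases x, cases y, cases z) (auto simp: model_mult_def sigma_add)
next
  fix x :: elt
  show "\<exists>y \<in> carrier Model. y \<otimes>\<^bsub>Model\<^esub> x = \<one>\<^bsub>Model\<^esub>"
    by (rule bexI[of _ "model_inv x"]) (auto simp: model_mult_def model_inv_def sigma_uminus)
qed (auto simp: model_mult_def)

lemma inv_Model [simp]: "inv\<^bsub>Model\<^esub> g = model_inv g"
  by (rule group.inv_equality[OF group_Model]) (auto simp: model_mult_def model_inv_def sigma_uminus)

text \<open>The automorphisms of \<open>Model\<close> (see \<open>aut_Model_eq_affine_aut\<close>): the linear part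
  \<open>lin a b c mu nu\<close> is the general additive map commuting with \<open>sigma\<close>, and the image
  \<open>(shift e d, True)\<close> of \<open>(0, True)\<close> must satisfy \<open>shift e d + sigma (shift e d) = 0\<close>.\<close>

definition lin :: "int \<Rightarrow> int \<Rightarrow> int \<Rightarrow> int \<Rightarrow> int \<Rightarrow> int \<times> int \<times> int \<Rightarrow> int \<times> int \<times> int" where
  "lin a b c mu nu = (\<lambda>(u, w, t). ((a - 2 * b) * u - 2 * c * w, mu * u + nu * w, b * u + c * w + a * t))"

definition shift :: "int \<Rightarrow> int \<Rightarrow> int \<times> int \<times> int" where
  "shift e d = (- 2 * e, d, e)"

definition affine_aut :: "int \<Rightarrow> int \<Rightarrow> int \<Rightarrow> int \<Rightarrow> int \<Rightarrow> int \<Rightarrow> int \<Rightarrow> elt \<Rightarrow> elt" where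
  "affine_aut a b c mu nu e d = (\<lambda>(z, E). (lin a b c mu nu z + (if E then shift e d else 0), E))"

lemma lin_simp [simp]:
  "lin a b c mu nu (u, w, t) = ((a - 2 * b) * u - 2 * c * w, mu * u + nu * w, b * u + c * w + a * t)"
  by (simp add: lin_def)

lemma lin_add: "lin a b c mu nu (x + y) = lin a b c mu nu x + lin a b c mu nu y"
  by (cases x, cases y) (simp add: algebra_simps)

lemma lin_sigma: "lin a b c mu nu (sigma z) = sigma (lin a b c mu nu z)"
  by (cases z) (simp add: algebra_simps)

lemma sigma_lin: "sigma (lin a b c mu nu z) = lin a (a - b) (- c) (- mu) (- nu) z"
  by (cases z) (simp add: algebra_simps)

lemma sigma_shift: "sigma (shift e d) = shift (- e) (- d)"
  by (simp add: shift_def)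

lemma affine_aut_hom: "affine_aut a b c mu nu e d \<in> hom Model Model"
proof -
  have "affine_aut a b c mu nu e d (model_mult x y) =
      model_mult (affine_aut a b c mu nu e d x) (affine_aut a b c mu nu e d y)" for x y
  proof -
    have "shift e d + sigma (shift e d) = 0"
      by (simp add: shift_def zero_prod_def)
    then show ?thesis
      by (cases x, cases y, cases "snd x", cases "snd y")
        (auto simp: model_mult_def affine_aut_def lin_add lin_sigma sigma_add algebra_simps)
  qed
  then show ?thesis
    unfolding hom_def by auto
qed

text \<open>Twisted conjugacy on the translation coset \<open>\<int>\<^sup>3 \<times> {False}\<close>, in coordinates.\<close>

definition coord_rel :: "int \<Rightarrow> int \<Rightarrow> int \<Rightarrow> int \<Rightarrow> int \<Rightarrow> int \<Rightarrow> int \<Rightarrow>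
    int \<times> int \<times> int \<Rightarrow> int \<times> int \<times> int \<Rightarrow> bool" where
  "coord_rel a b c mu nu e d z z' \<longleftrightarrow>
     (\<exists>x. z = z' + (x - lin a b c mu nu x)) \<or> (\<exists>x. z = sigma z' - shift e d + (x - lin a b c mu nu x))"

lemma coord_rel_refl: "coord_rel a b c mu nu e d z z"
  unfolding coord_rel_def by (rule disjI1, rule exI[of _ 0]) (simp add: zero_prod_def)

text \<open>Twisted conjugacy preserves the coset and, on the coset \<open>\<int>\<^sup>3 \<times> {True}\<close>, it is the
  coordinate relation of the automorphism conjugated by \<open>sigma\<close>.\<close>

lemma reid_rel_affine_aut:
  "((z, E), (z', E')) \<in> reid_rel Model (affine_aut a b c mu nu e d) \<longleftrightarrow>
    E = E' \<and> (if E' then coord_rel a (a - b) (- c) (- mu) (- nu) (- e) (- d) z z'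
              else coord_rel a b c mu nu e d z z')"
proof -
  let ?M = "lin a b c mu nu" and ?d = "shift e d" and ?\<phi> = "affine_aut a b c mu nu e d"
  have twisted_conj: "model_mult (model_mult (x, X) (z', E')) (model_inv (?\<phi> (x, X))) =
    (if X then (if E' then x + sigma z' - sigma (?M x) - sigma ?d else x + sigma z' - ?M x - ?d)
          else (if E' then x + z' - sigma (?M x) else x + z' - ?M x), E')" for x X
    by (cases X; cases E')
      (auto simp: model_mult_def model_inv_def affine_aut_def sigma_add sigma_uminus sigma_diff algebra_simps)
  have "((z, E), (z', E')) \<in> reid_rel Model ?\<phi> \<longleftrightarrow>
     (\<exists>x X. (z, E) = model_mult (model_mult (x, X) (z', E')) (model_inv (?\<phi> (x, X))))"
    unfolding reid_rel_def by auto
  also have "\<dots> \<longleftrightarrow> E = E' \<and>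
      (if E' then (\<exists>x. z = x + z' - sigma (?M x)) \<or> (\<exists>x. z = x + sigma z' - sigma (?M x) - sigma ?d)
       else (\<exists>x. z = x + z' - ?M x) \<or> (\<exists>x. z = x + sigma z' - ?M x - ?d))"
    unfolding twisted_conj by (cases E'; simp add: ex_bool_eq del: split_paired_Ex; blast)
  also have "\<dots> \<longleftrightarrow> E = E' \<and> (if E' then coord_rel a (a - b) (- c) (- mu) (- nu) (- e) (- d) z z'
                                 else coord_rel a b c mu nu e d z z')"
    unfolding coord_rel_def sigma_lin sigma_shift by (simp add: algebra_simps del: split_paired_Ex)
  finally show ?thesis .
qed

lemma reid_rel_affine_aut_refl: "(g, g) \<in> reid_rel Model (affine_aut a b c mu nu e d)"
  by (cases g) (simp add: reid_rel_affine_aut coord_rel_refl)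

section \<open>Twisted conjugacy for automorphisms with \<open>a = -1\<close>\<close>

lemma ex_add_iff_diff_in_range: "(\<exists>x. z = z' + F x) \<longleftrightarrow> (z::'a::ab_group_add) - z' \<in> range F"
  by (metis add.commute diff_add_cancel add_diff_cancel_left' rangeE rangeI)

text \<open>The parameters of \<open>affine_aut (-1) b c mu (2 * n + 1) e d\<close>: for a surjective \<open>affine_aut (-1) b c mu nu e d\<close>,
  \<open>nu\<close> is odd by \<open>lin_surj_coeffs\<close>.\<close>

locale reversing_aut =
  fixes b c mu n e d :: int
begin

abbreviation "rel \<equiv> coord_rel (-1) b c mu (2 * n + 1) e d"

abbreviation "L \<equiv> lattice3 (2 * (1 + b)) (2 * c) (- mu) (- 2 * n) (- b) (- c)"

definition rho :: "int \<times> int \<times> int \<Rightarrow> int \<times> int \<times> int" where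
  "rho z = sigma z - shift e d"

definition "D = - 4 * n * (1 + b) + 2 * c * mu"

lemma range_id_minus_lin: "range (\<lambda>x. x - lin (-1) b c mu (2 * n + 1) x) = L"
proof (intro equalityI subsetI)
  fix z assume "z \<in> range (\<lambda>x. x - lin (-1) b c mu (2 * n + 1) x)"
  then obtain u w t where "z = (u, w, t) - lin (-1) b c mu (2 * n + 1) (u, w, t)"
    by auto
  then have "z = (2 * (1 + b) * u + 2 * c * w, - mu * u + - 2 * n * w, - b * u + - c * w + 2 * t)"
    by (simp add: algebra_simps)
  then show "z \<in> L"
    by (simp only: lattice3I)
next
  fix z assume "z \<in> L"
  then obtain u w t where "z = (2 * (1 + b) * u + 2 * c * w, - mu * u + - 2 * n * w, - b * u + - c * w + 2 * t)"
    by (rule lattice3E)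
  then have "z = (u, w, t) - lin (-1) b c mu (2 * n + 1) (u, w, t)"
    by (simp add: algebra_simps)
  then show "z \<in> range (\<lambda>x. x - lin (-1) b c mu (2 * n + 1) x)"
    by blast
qed

lemma rel_iff: "rel z z' \<longleftrightarrow> z - z' \<in> L \<or> z - rho z' \<in> L"
  unfolding coord_rel_def rho_def range_id_minus_lin[symmetric] ex_add_iff_diff_in_range
  by (simp add: algebra_simps)

lemma sigma_mem_L:
  assumes "z \<in> L"
  shows "sigma z \<in> L"
proof -
  obtain x where "z = x - lin (-1) b c mu (2 * n + 1) x"
    using assms unfolding range_id_minus_lin[symmetric] by blast
  then have "sigma z = sigma x - lin (-1) b c mu (2 * n + 1) (sigma x)"
    by (simp add: sigma_diff lin_sigma)
  then show ?thesis
    unfolding range_id_minus_lin[symmetric] by blast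
qed

lemma rho_rho: "rho (rho z) = z"
  unfolding rho_def by (simp add: sigma_diff sigma_shift shift_def)

lemma rho_diff: "rho z - rho z' = sigma (z - z')"
  unfolding rho_def by (simp add: sigma_diff)

lemma sub_rho_in_LE:
  assumes "rho z - z \<in> L"
  obtains \<tau> a where "fst z = e + 2 * (1 + b) * \<tau> - c * a" "2 * fst (snd z) + d = 2 * (n * a - mu * \<tau>)"
proof -
  obtain u w t where z: "z = (u, w, t)" by (cases z)
  obtain a1 a2 \<tau> where "rho z - z = (2 * (1 + b) * a1 + 2 * c * a2, - mu * a1 + - 2 * n * a2, - b * a1 + - c * a2 + 2 * \<tau>)"
    using assms by (rule lattice3E)
  then have 1: "2 * e - 2 * u = 2 * (1 + b) * a1 + 2 * c * a2" and 2: "- 2 * w - d = - mu * a1 + - 2 * n * a2"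
    and 3: "u - e = - b * a1 + - c * a2 + 2 * \<tau>"
    unfolding z rho_def shift_def by (simp_all add: algebra_simps)
  have "a1 = - 2 * \<tau>"
    using 1 3 by (simp add: algebra_simps)
  then show thesis
    using 1 2 that[of \<tau> a2] unfolding z by (simp add: algebra_simps)
qed

lemma sub_rho_notin_L_if_odd: "odd d \<Longrightarrow> rho z - z \<notin> L"
  by (metis sub_rho_in_LE dvd_add_right_iff dvd_triv_left)

text \<open>For even \<open>d\<close>, the four points \<open>fixed_rep p\<close>, \<open>p \<in> {0, 1} \<times> {0, 1}\<close>, represent the
  classes modulo \<open>L\<close> fixed by \<open>rho\<close>.\<close>

definition fixed_rep :: "int \<times> int \<Rightarrow> int \<times> int \<times> int" where
  "fixed_rep = (\<lambda>(r, t). (e - r * c, - (d div 2) + r * n, t))"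

lemma sub_rho_fixed_rep_in_L:
  assumes "even d"
  shows "rho (fixed_rep p) - fixed_rep p \<in> L"
proof -
  obtain r t where p: "p = (r, t)" by (cases p)
  have "rho (fixed_rep p) - fixed_rep p = (2 * (1 + b) * 0 + 2 * c * r, - mu * 0 + - 2 * n * r, - b * 0 + - c * r + 2 * 0)"
    using assms unfolding p fixed_rep_def rho_def shift_def by (simp add: algebra_simps)
  then show ?thesis
    by (simp only: lattice3I)
qed

lemma fixed_rep_cover:
  assumes "even d" and "rho z - z \<in> L"
  shows "\<exists>p \<in> {0, 1} \<times> {0, 1}. z - fixed_rep p \<in> L"
proof -
  obtain u w t where z: "z = (u, w, t)" by (cases z)
  obtain \<tau> a where u: "u = e + 2 * (1 + b) * \<tau> - c * a" and w: "2 * w + d = 2 * (n * a - mu * \<tau>)"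
    using assms(2) by (rule sub_rho_in_LE) (simp add: z)
  define j where "j = a div 2"
  define r where "r = a mod 2"
  define t' where "t' = (t + b * \<tau> - c * j) mod 2"
  define \<tau>' where "\<tau>' = (t + b * \<tau> - c * j) div 2"
  have "a = 2 * j + r" "t = t' + 2 * \<tau>' - b * \<tau> + c * j"
    unfolding j_def r_def t'_def \<tau>'_def by simp_all
  moreover have "w = - (d div 2) - mu * \<tau> + n * a"
    using w assms(1) by (auto elim!: evenE)
  ultimately have "z - fixed_rep (r, t') =
      (2 * (1 + b) * \<tau> + 2 * c * - j, - mu * \<tau> + - 2 * n * - j, - b * \<tau> + - c * - j + 2 * \<tau>')"
    unfolding z u fixed_rep_def by (simp add: algebra_simps)
  then have "z - fixed_rep (r, t') \<in> L"
    by (simp only: lattice3I)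
  moreover have "(r, t') \<in> {0, 1} \<times> {0, 1}"
    unfolding r_def t'_def by auto
  ultimately show ?thesis
    by blast
qed

lemma fixed_rep_inj_mod_L:
  assumes "D \<noteq> 0" and "p \<in> {0, 1} \<times> {0, 1}" "p' \<in> {0, 1} \<times> {0, 1}"
    and "fixed_rep p - fixed_rep p' \<in> L"
  shows "p = p'"
proof -
  obtain r t r' t' where p: "p = (r, t)" and p': "p' = (r', t')"
    by (cases p, cases p')
  obtain a1 a2 \<tau> where "fixed_rep p - fixed_rep p' =
      (2 * (1 + b) * a1 + 2 * c * a2, - mu * a1 + - 2 * n * a2, - b * a1 + - c * a2 + 2 * \<tau>)"
    using assms(4) by (rule lattice3E)
  moreover define X where "X = 2 * a2 + (r - r')"
  ultimately have 1: "(2 + 2 * b) * a1 + c * X = 0" and 2: "mu * a1 + n * X = 0"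
    and 3: "t - t' = - b * a1 + - c * a2 + 2 * \<tau>"
    unfolding p p' fixed_rep_def X_def by (simp_all add: algebra_simps)
  have "D * a1 = 2 * (c * (mu * a1 + n * X) - n * ((2 + 2 * b) * a1 + c * X))"
    unfolding D_def by (simp add: algebra_simps)
  then have "a1 = 0"
    using 1 2 assms(1) by simp
  then have "X = 0"
    using 1 2 assms(1) unfolding D_def by auto
  then have "r = r'"
    using assms(2,3) unfolding p p' X_def by (auto; presburger)
  with \<open>X = 0\<close> have "a2 = 0"
    unfolding X_def by simp
  then have "t = t'"
    using 3 \<open>a1 = 0\<close> assms(2,3) unfolding p p' by (auto; presburger)
  then show ?thesis
    using \<open>r = r'\<close> p p' by simp
qed

end

locale reversing_aut_normal_form = reversing_aut +
  fixes \<kappa> :: "int \<times> int \<times> int \<Rightarrow> int \<times> int \<times> int" and R :: "(int \<times> int \<times> int) set"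
  assumes D_nonzero: "D \<noteq> 0" and finite_R: "finite R" and card_R: "card R = 2 * nat \<bar>D\<bar>"
    and \<kappa>_in_R: "\<kappa> z \<in> R" and \<kappa>_R: "r \<in> R \<Longrightarrow> \<kappa> r = r"
    and \<kappa>_eq_iff: "\<kappa> z = \<kappa> z' \<longleftrightarrow> z - z' \<in> L"
begin

lemma range_\<kappa>: "range \<kappa> = R"
proof
  show "range \<kappa> \<subseteq> R"
    using \<kappa>_in_R by auto
  show "R \<subseteq> range \<kappa>"
    using \<kappa>_R by (metis rangeI subsetI)
qed

lemma \<kappa>_\<kappa>: "\<kappa> (\<kappa> z) = \<kappa> z"
  by (rule \<kappa>_R[OF \<kappa>_in_R])

lemma \<kappa>_rho_cong: "\<kappa> z = \<kappa> z' \<Longrightarrow> \<kappa> (rho z) = \<kappa> (rho z')"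
  unfolding \<kappa>_eq_iff rho_diff by (rule sigma_mem_L)

lemma card_rho_fixed: "card {r \<in> R. \<kappa> (rho r) = r} = (if even d then 4 else 0)"
proof -
  have fixed_iff: "\<kappa> (rho r) = r \<longleftrightarrow> rho r - r \<in> L" if "r \<in> R" for r
    using \<kappa>_eq_iff[of "rho r" r] \<kappa>_R[OF that] by simp
  show ?thesis
  proof (cases "even d")
    case False
    then have "\<kappa> (rho r) \<noteq> r" if "r \<in> R" for r
      using fixed_iff[OF that] sub_rho_notin_L_if_odd by simp
    then have "{r \<in> R. \<kappa> (rho r) = r} = {}"
      by blast
    then show ?thesis
      using False by (simp del: Collect_empty_eq)
  next
    case True
    let ?I = "{0, 1} \<times> {0, 1 :: int}"
    have "{r \<in> R. \<kappa> (rho r) = r} = (\<kappa> \<circ> fixed_rep) ` ?I"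
    proof (intro equalityI subsetI)
      fix r assume "r \<in> {r \<in> R. \<kappa> (rho r) = r}"
      then have r: "r \<in> R" "\<kappa> (rho r) = r"
        by simp_all
      then have "rho r - r \<in> L"
        using fixed_iff[OF r(1)] by simp
      then obtain p where "p \<in> ?I" "r - fixed_rep p \<in> L"
        using fixed_rep_cover True \<open>rho r - r \<in> L\<close> by blast
      moreover have "r = \<kappa> (fixed_rep p)"
        using \<kappa>_eq_iff[of r "fixed_rep p"] \<kappa>_R[OF r(1)] \<open>r - fixed_rep p \<in> L\<close> by simp
      ultimately show "r \<in> (\<kappa> \<circ> fixed_rep) ` ?I"
        by (intro image_eqI[where x = p]) simp_all
    next
      fix r assume "r \<in> (\<kappa> \<circ> fixed_rep) ` ?I"
      then obtain p where r: "r = \<kappa> (fixed_rep p)" by auto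
      have "\<kappa> (rho r) = \<kappa> (rho (fixed_rep p))"
        unfolding r by (rule \<kappa>_rho_cong[OF \<kappa>_\<kappa>])
      also have "\<dots> = r"
        unfolding r \<kappa>_eq_iff using sub_rho_fixed_rep_in_L[OF True] .
      finally show "r \<in> {r \<in> R. \<kappa> (rho r) = r}"
        using r \<kappa>_in_R by simp
    qed
    moreover have "inj_on (\<kappa> \<circ> fixed_rep) ?I"
    proof (rule inj_onI)
      fix p p' assume "p \<in> ?I" "p' \<in> ?I" "(\<kappa> \<circ> fixed_rep) p = (\<kappa> \<circ> fixed_rep) p'"
      then show "p = p'"
        using fixed_rep_inj_mod_L[OF D_nonzero, of p p'] \<kappa>_eq_iff[of "fixed_rep p" "fixed_rep p'"] by simp
    qed
    ultimately show ?thesis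
      using True card_image card_cartesian_product[of "{0, 1 :: int}" "{0, 1 :: int}"] by simp
  qed
qed

end

context reversing_aut
begin

lemma classes_finite:
  assumes "D \<noteq> 0"
  obtains \<omega> :: "int \<times> int \<times> int \<Rightarrow> (int \<times> int \<times> int) set"
  where "\<And>z z'. rel z z' \<longleftrightarrow> \<omega> z = \<omega> z'" "finite (range \<omega>)"
    "card (range \<omega>) = nat \<bar>D\<bar> + (if even d then 2 else 0)"
proof (rule lattice3_normal_form[of "2 * (1 + b)" "- 2 * n" "2 * c" "- mu" "- b" "- c"])
  show "2 * (1 + b) * (- 2 * n) - 2 * c * - mu \<noteq> 0"
    using assms unfolding D_def by (simp add: algebra_simps)
next
  fix \<kappa> R
  assume "finite R" "card R = 2 * nat \<bar>2 * (1 + b) * (- 2 * n) - 2 * c * - mu\<bar>"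
    "\<And>z. \<kappa> z \<in> R" "\<And>r. r \<in> R \<Longrightarrow> \<kappa> r = r" "\<And>z z'. \<kappa> z = \<kappa> z' \<longleftrightarrow> z - z' \<in> L"
  with assms interpret reversing_aut_normal_form b c mu n e d \<kappa> R
    by unfold_locales (simp_all add: D_def algebra_simps)
  define \<omega> where "\<omega> z = {\<kappa> z, \<kappa> (rho z)}" for z
  have "rel z z' \<longleftrightarrow> \<omega> z = \<omega> z'" for z z'
  proof -
    have "rel z z' \<longleftrightarrow> \<kappa> z = \<kappa> z' \<or> \<kappa> z = \<kappa> (rho z')"
      unfolding rel_iff \<kappa>_eq_iff ..
    also have "\<dots> \<longleftrightarrow> \<omega> z = \<omega> z'"
      unfolding \<omega>_def by (rule doubleton_classes_eq_iff[symmetric]) (fact \<kappa>_rho_cong rho_rho)+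
    finally show ?thesis .
  qed
  moreover have "finite (range \<omega>)"
    using finite_R unfolding \<omega>_def
    by (simp add: range_doubleton_classes[of \<kappa> rho, OF \<kappa>_\<kappa> \<kappa>_rho_cong] range_\<kappa>)
  moreover have "2 * card (range \<omega>) = card R + card {r \<in> R. \<kappa> (rho r) = r}"
    using card_doubleton_classes[of \<kappa> rho, OF _ \<kappa>_\<kappa> \<kappa>_rho_cong rho_rho] finite_R
    unfolding \<omega>_def range_\<kappa> by simp
  then have "card (range \<omega>) = nat \<bar>D\<bar> + (if even d then 2 else 0)"
    using card_R card_rho_fixed by (cases "even d") simp_all
  ultimately show thesis
    by (rule that)
qed

end

lemma singular_int_matrix_left_kernel:
  fixes m11 m12 m21 m22 :: int
  assumes "m11 * m22 - m12 * m21 = 0"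
  obtains l1 l2 where "l1 \<noteq> 0 \<or> l2 \<noteq> 0" "l1 * m11 + l2 * m21 = 0" "l1 * m12 + l2 * m22 = 0"
proof (cases "m11 = 0 \<and> m21 = 0")
  case True
  show thesis
  proof (cases "m12 = 0 \<and> m22 = 0")
    case True
    then show thesis
      using that[of 1 0] \<open>m11 = 0 \<and> m21 = 0\<close> by simp
  next
    case False
    then show thesis
      using that[of m22 "- m12"] \<open>m11 = 0 \<and> m21 = 0\<close> by (auto simp: algebra_simps)
  qed
next
  case False
  then show thesis
    using that[of m21 "- m11"] assms by (auto simp: algebra_simps)
qed

lemma coord_rel_preserving_invariant:
  assumes "coord_rel 1 b c mu nu e d z z'"
  shows "fst z + 2 * snd (snd z) = fst z' + 2 * snd (snd z')"
proof -
  obtain x where "z = z' + (x - lin 1 b c mu nu x) \<or> z = sigma z' - shift e d + (x - lin 1 b c mu nu x)"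
    using assms unfolding coord_rel_def by blast
  then show ?thesis
    by (cases x, cases z') (auto simp: shift_def algebra_simps)
qed

context reversing_aut
begin

lemma classes_infinite:
  assumes "D = 0"
  obtains \<omega> :: "int \<times> int \<times> int \<Rightarrow> int"
  where "\<And>z z'. rel z z' \<Longrightarrow> \<omega> z = \<omega> z'" "infinite (range \<omega>)"
proof -
  obtain l1 l2 where l: "l1 \<noteq> 0 \<or> l2 \<noteq> 0"
    "l1 * (2 * (1 + b)) + l2 * - mu = 0" "l1 * (2 * c) + l2 * (- 2 * n) = 0"
    using singular_int_matrix_left_kernel[of "2 * (1 + b)" "- 2 * n" "2 * c" "- mu"] assms
    unfolding D_def by (auto simp: algebra_simps)
  define C where "C = 2 * l1 * e - l2 * d"
  define \<psi> where "\<psi> = (\<lambda>(u :: int, w :: int, t :: int). 2 * (l1 * u + l2 * w) - C)"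
  have \<psi>_L: "\<psi> (z + y) = \<psi> z" if y: "y \<in> L" for z y
  proof -
    obtain a1 a2 \<tau> where "y = (2 * (1 + b) * a1 + 2 * c * a2, - mu * a1 + - 2 * n * a2, - b * a1 + - c * a2 + 2 * \<tau>)"
      using y by (rule lattice3E)
    moreover have "l1 * (2 * (1 + b) * a1 + 2 * c * a2) + l2 * (- mu * a1 + - 2 * n * a2) =
        a1 * (l1 * (2 * (1 + b)) + l2 * - mu) + a2 * (l1 * (2 * c) + l2 * (- 2 * n))"
      by (simp add: algebra_simps)
    then have "l1 * (2 * (1 + b) * a1 + 2 * c * a2) + l2 * (- mu * a1 + - 2 * n * a2) = 0"
      using l(2,3) by simp
    ultimately show ?thesis
      unfolding \<psi>_def by (cases z) (simp add: algebra_simps)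
  qed
  have \<psi>_rho: "\<psi> (rho z) = - \<psi> z" for z
    unfolding \<psi>_def rho_def C_def shift_def by (cases z) (simp add: algebra_simps)
  have "\<bar>\<psi> z\<bar> = \<bar>\<psi> z'\<bar>" if "rel z z'" for z z'
  proof -
    have "z = z' + (z - z')" "z = rho z' + (z - rho z')"
      by simp_all
    then show ?thesis
      using that \<psi>_L \<psi>_rho unfolding rel_iff by (metis abs_minus_cancel)
  qed
  moreover have "infinite (range (\<lambda>z. \<bar>\<psi> z\<bar>))"
    unfolding infinite_int_iff_unbounded
  proof
    fix m :: int
    define k where "k = \<bar>m\<bar> + \<bar>C\<bar> + 1"
    have "l1 * l1 + l2 * l2 \<ge> 1"
      using l(1) sum_squares_gt_zero_iff[of l1 l2] by simp
    then have "k * 1 \<le> k * (l1 * l1 + l2 * l2)"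
      unfolding k_def by (intro mult_left_mono) auto
    then have "\<bar>\<bar>\<psi> (k * l1, k * l2, 0)\<bar>\<bar> > m"
      unfolding \<psi>_def k_def by (simp add: algebra_simps) linarith
    then show "\<exists>n. \<bar>n\<bar> > m \<and> n \<in> range (\<lambda>z. \<bar>\<psi> z\<bar>)"
      by blast
  qed
  ultimately show thesis
    by (rule that)
qed

end

section \<open>Reidemeister numbers of the affine automorphisms\<close>

lemma reid_rel_reversing:
  "((z, E), (z', E')) \<in> reid_rel Model (affine_aut (-1) b c mu (2 * n + 1) e d) \<longleftrightarrow>
    E = E' \<and> (if E' then reversing_aut.rel (- 1 - b) (- c) (- mu) (- n - 1) (- e) (- d) z z'
              else reversing_aut.rel b c mu n e d z z')"
  unfolding reid_rel_affine_aut by (simp add: algebra_simps)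

lemma D_reversing_conj: "reversing_aut.D (- 1 - b) (- c) (- mu) (- n - 1) = - 4 * b * (n + 1) + 2 * c * mu"
  by (simp add: reversing_aut.D_def algebra_simps)

lemma reidemeister_number_Model_infinite:
  assumes coset: "\<And>g g'. (g, g') \<in> reid_rel Model \<phi> \<Longrightarrow> snd g = snd g'"
    and refl: "\<And>g. (g, g) \<in> reid_rel Model \<phi>"
    and inv: "\<And>z z'. ((z, E), (z', E)) \<in> reid_rel Model \<phi> \<Longrightarrow> \<omega> z = \<omega> z'"
    and inf: "infinite (range \<omega>)"
  shows "reidemeister_number Model \<phi> = \<infinity>"
proof -
  define \<Omega> where "\<Omega> g = (if snd g = E then Some (\<omega> (fst g)) else None)" for g :: elt
  have "Some ` range \<omega> \<subseteq> range \<Omega>"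
    unfolding \<Omega>_def by (auto intro!: image_eqI[where x = "(_, E)"])
  then have "infinite (range \<Omega>)"
    using inf finite_subset finite_imageD[of Some] by (metis inj_Some)
  moreover have "\<Omega> g = \<Omega> g'" if "(g, g') \<in> reid_rel Model \<phi>" for g g'
    using that coset[OF that] inv unfolding \<Omega>_def by (cases g, cases g') auto
  ultimately have "infinite (UNIV // reid_rel Model \<phi>)"
    using infinite_quotient_if_infinite_invariant[of UNIV "reid_rel Model \<phi>" \<Omega>] refl by simp
  then show ?thesis
    unfolding reidemeister_number_def by simp
qed

lemma reidemeister_number_preserving:
  "reidemeister_number Model (affine_aut 1 b c mu nu e d) = \<infinity>"
proof (rule reidemeister_number_Model_infinite[where E = False])
  have "surj (\<lambda>z :: int \<times> int \<times> int. fst z + 2 * snd (snd z))"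
    by (rule surjI[of _ "\<lambda>k. (k, 0, 0)"]) simp
  then show "infinite (range (\<lambda>z :: int \<times> int \<times> int. fst z + 2 * snd (snd z)))"
    using infinite_UNIV_int by simp
qed (auto simp: reid_rel_affine_aut reid_rel_affine_aut_refl coord_rel_preserving_invariant)

lemma reidemeister_number_reversing_infinite:
  assumes "- 4 * n * (1 + b) + 2 * c * mu = 0 \<or> - 4 * b * (n + 1) + 2 * c * mu = 0"
  shows "reidemeister_number Model (affine_aut (-1) b c mu (2 * n + 1) e d) = \<infinity>"
  using assms
proof
  assume "- 4 * n * (1 + b) + 2 * c * mu = 0"
  then obtain \<omega> :: "int \<times> int \<times> int \<Rightarrow> int"
    where "\<And>z z'. reversing_aut.rel b c mu n e d z z' \<Longrightarrow> \<omega> z = \<omega> z'" "infinite (range \<omega>)"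
    using reversing_aut.classes_infinite reversing_aut.D_def by metis
  then show ?thesis
    by (intro reidemeister_number_Model_infinite[where E = False and \<omega> = \<omega>])
      (auto simp: reid_rel_reversing reid_rel_affine_aut_refl)
next
  assume "- 4 * b * (n + 1) + 2 * c * mu = 0"
  then obtain \<omega> :: "int \<times> int \<times> int \<Rightarrow> int"
    where "\<And>z z'. reversing_aut.rel (- 1 - b) (- c) (- mu) (- n - 1) (- e) (- d) z z' \<Longrightarrow> \<omega> z = \<omega> z'"
      "infinite (range \<omega>)"
    using reversing_aut.classes_infinite D_reversing_conj by metis
  then show ?thesis
    by (intro reidemeister_number_Model_infinite[where E = True and \<omega> = \<omega>])
      (auto simp: reid_rel_reversing reid_rel_affine_aut_refl)
qed

lemma reidemeister_number_reversing_finite: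
  assumes D0: "- 4 * n * (1 + b) + 2 * c * mu \<noteq> 0" and D1: "- 4 * b * (n + 1) + 2 * c * mu \<noteq> 0"
  shows "reidemeister_number Model (affine_aut (-1) b c mu (2 * n + 1) e d) =
    enat (nat \<bar>- 4 * n * (1 + b) + 2 * c * mu\<bar> + nat \<bar>- 4 * b * (n + 1) + 2 * c * mu\<bar> +
      (if even d then 4 else 0))"
proof -
  let ?D0 = "reversing_aut.D b c mu n" and ?D1 = "reversing_aut.D (- 1 - b) (- c) (- mu) (- n - 1)"
  have "?D0 \<noteq> 0" "?D1 \<noteq> 0"
    using D0 D1 by (simp_all add: reversing_aut.D_def algebra_simps)
  obtain \<omega>0 :: "int \<times> int \<times> int \<Rightarrow> (int \<times> int \<times> int) set"
    where \<omega>0: "\<And>z z'. reversing_aut.rel b c mu n e d z z' \<longleftrightarrow> \<omega>0 z = \<omega>0 z'" "finite (range \<omega>0)"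
      "card (range \<omega>0) = nat \<bar>?D0\<bar> + (if even d then 2 else 0)"
    by (rule reversing_aut.classes_finite[of b c mu n e d, OF \<open>?D0 \<noteq> 0\<close>]) (rule that)
  obtain \<omega>1 :: "int \<times> int \<times> int \<Rightarrow> (int \<times> int \<times> int) set"
    where \<omega>1: "\<And>z z'. reversing_aut.rel (- 1 - b) (- c) (- mu) (- n - 1) (- e) (- d) z z' \<longleftrightarrow> \<omega>1 z = \<omega>1 z'"
      "finite (range \<omega>1)" "card (range \<omega>1) = nat \<bar>?D1\<bar> + (if even (- d) then 2 else 0)"
    by (rule reversing_aut.classes_finite[of "- 1 - b" "- c" "- mu" "- n - 1" "- e" "- d", OF \<open>?D1 \<noteq> 0\<close>]) (rule that)
  define \<omega> where "\<omega> g = (snd g, if snd g then \<omega>1 (fst g) else \<omega>0 (fst g))" for g :: elt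
  have classes: "(g, g') \<in> reid_rel Model (affine_aut (-1) b c mu (2 * n + 1) e d) \<longleftrightarrow> \<omega> g = \<omega> g'"
    for g g'
  proof -
    obtain z E z' E' where g: "g = (z, E)" "g' = (z', E')"
      by (cases g, cases g')
    show ?thesis
      unfolding g \<omega>_def reid_rel_reversing
      by (cases E; cases E') (simp_all only: \<omega>0(1) \<omega>1(1) fst_conv snd_conv if_True if_False prod.inject simp_thms)
  qed
  have "reid_rel Model (affine_aut (-1) b c mu (2 * n + 1) e d) \<subseteq> UNIV \<times> UNIV"
    by auto
  note quotient = card_quotient_eq_card_image[OF this classes] finite_quotient_iff_finite_image[OF this classes]
  have "range \<omega> = Pair False ` range \<omega>0 \<union> Pair True ` range \<omega>1"
  proof (intro equalityI subsetI)
    fix x assume "x \<in> range \<omega>"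
    then obtain g where "x = \<omega> g" by blast
    then show "x \<in> Pair False ` range \<omega>0 \<union> Pair True ` range \<omega>1"
      unfolding \<omega>_def by (cases "snd g") auto
  next
    fix x assume "x \<in> Pair False ` range \<omega>0 \<union> Pair True ` range \<omega>1"
    then show "x \<in> range \<omega>"
    proof
      assume "x \<in> Pair False ` range \<omega>0"
      then obtain z where "x = (False, \<omega>0 z)" by blast
      then have "x = \<omega> (z, False)" unfolding \<omega>_def by simp
      then show ?thesis by blast
    next
      assume "x \<in> Pair True ` range \<omega>1"
      then obtain z where "x = (True, \<omega>1 z)" by blast
      then have "x = \<omega> (z, True)" unfolding \<omega>_def by simp
      then show ?thesis by blast
    qed
  qed
  moreover have "card (Pair E ` A) = card A" for E :: bool and A :: "(int \<times> int \<times> int) set set"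
    by (rule card_image) (simp add: inj_on_def)
  moreover have "Pair False ` range \<omega>0 \<inter> Pair True ` range \<omega>1 = {}"
    by auto
  ultimately have "finite (range \<omega>)" "card (range \<omega>) = card (range \<omega>0) + card (range \<omega>1)"
    using \<omega>0(2) \<omega>1(2) card_Un_disjoint[of "Pair False ` range \<omega>0" "Pair True ` range \<omega>1"] by simp_all
  with quotient show ?thesis
    unfolding reidemeister_number_def using \<omega>0(3) \<omega>1(3)
    by (simp add: reversing_aut.D_def[of b c mu n] D_reversing_conj)
qed

section \<open>Every automorphism of the model is affine\<close>

lemma additive_int_eq_mult:
  fixes g :: "int \<Rightarrow> int"
  assumes add: "\<And>x y. g (x + y) = g x + g y"
  shows "g k = k * g 1"
proof (induction k rule: int_induct[where k = 0])
  case base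
  show ?case using add[of 0 0] by simp
next
  case (step1 i)
  then show ?case using add[of i 1] by (simp add: algebra_simps)
next
  case (step2 i)
  then show ?case using add[of "i - 1" 1] by (simp add: algebra_simps)
qed

lemma additive_int_triple_eq_mult:
  fixes h :: "int \<Rightarrow> int \<times> int \<times> int"
  assumes "\<And>x y. h (x + y) = h x + h y"
  shows "h k = (k * fst (h 1), k * fst (snd (h 1)), k * snd (snd (h 1)))"
proof -
  have "fst (h k) = k * fst (h 1)" "fst (snd (h k)) = k * fst (snd (h 1))" "snd (snd (h k)) = k * snd (snd (h 1))"
    by (rule additive_int_eq_mult, simp add: assms)+
  then show ?thesis
    by (simp add: prod_eq_iff)
qed

lemma additive_int3_linear:
  fixes f :: "int \<times> int \<times> int \<Rightarrow> int \<times> int \<times> int"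
  assumes add: "\<And>x y. f (x + y) = f x + f y"
  obtains m11 m12 m13 m21 m22 m23 m31 m32 m33 where
    "\<And>u w t. f (u, w, t) = (m11 * u + m12 * w + m13 * t, m21 * u + m22 * w + m23 * t, m31 * u + m32 * w + m33 * t)"
proof -
  obtain m11 m21 m31 m12 m22 m32 m13 m23 m33 where
    m: "f (1, 0, 0) = (m11, m21, m31)" "f (0, 1, 0) = (m12, m22, m32)" "f (0, 0, 1) = (m13, m23, m33)"
    by (metis prod_cases3)
  have "f (x + y, 0, 0) = f (x, 0, 0) + f (y, 0, 0)" "f (0, x + y, 0) = f (0, x, 0) + f (0, y, 0)"
    "f (0, 0, x + y) = f (0, 0, x) + f (0, 0, y)" for x y
    using add[of "(x, 0, 0)" "(y, 0, 0)"] add[of "(0, x, 0)" "(0, y, 0)"] add[of "(0, 0, x)" "(0, 0, y)"]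
    by simp_all
  then have axes: "f (u, 0, 0) = (u * m11, u * m21, u * m31)" "f (0, w, 0) = (w * m12, w * m22, w * m32)"
    "f (0, 0, t) = (t * m13, t * m23, t * m33)" for u w t
    using additive_int_triple_eq_mult[where h = "\<lambda>k. f (k, 0, 0)" and k = u]
      additive_int_triple_eq_mult[where h = "\<lambda>k. f (0, k, 0)" and k = w]
      additive_int_triple_eq_mult[where h = "\<lambda>k. f (0, 0, k)" and k = t] m
    by simp_all
  have "f (u, w, t) = f (u, 0, 0) + f (0, w, 0) + f (0, 0, t)" for u w t
    using add[of "(u, 0, 0)" "(0, w, 0)"] add[of "(u, w, 0)" "(0, 0, t)"] by simp
  then have "f (u, w, t) = (m11 * u + m12 * w + m13 * t, m21 * u + m22 * w + m23 * t, m31 * u + m32 * w + m33 * t)"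
    for u w t
    using axes by (simp add: algebra_simps)
  then show thesis
    by (rule that)
qed

lemma translation_iff_commutes_with_conjugates:
  "snd g = False \<longleftrightarrow> (\<forall>h. model_mult g (model_mult (model_mult h g) (model_inv h)) =
                        model_mult (model_mult (model_mult h g) (model_inv h)) g)"
proof
  assume "snd g = False"
  then show "\<forall>h. model_mult g (model_mult (model_mult h g) (model_inv h)) =
                 model_mult (model_mult (model_mult h g) (model_inv h)) g"
    by (cases g) (auto simp: model_mult_def model_inv_def algebra_simps sigma_add sigma_uminus)
next
  assume commutes: "\<forall>h. model_mult g (model_mult (model_mult h g) (model_inv h)) =
                        model_mult (model_mult (model_mult h g) (model_inv h)) g"
  show "snd g = False"
  proof (rule ccontr)
    assume "snd g \<noteq> False"
    then obtain u w t where g: "g = ((u, w, t), True)"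
      by (cases g) auto
    have "model_mult g (model_mult (model_mult ((1, 0, 0), False) g) (model_inv ((1, 0, 0), False))) \<noteq>
        model_mult (model_mult (model_mult ((1, 0, 0), False) g) (model_inv ((1, 0, 0), False))) g"
      unfolding g by (simp add: model_mult_def model_inv_def)
    then show False
      using commutes by blast
  qed
qed

lemma aut_Model_preserves_translations:
  assumes "\<phi> \<in> iso Model Model"
  shows "snd (\<phi> g) = snd g"
proof -
  interpret group_hom Model Model \<phi>
    using assms group_Model by (simp add: group_hom_def group_hom_axioms_def iso_def)
  have hom: "\<phi> (model_mult x y) = model_mult (\<phi> x) (\<phi> y)" and inv: "\<phi> (model_inv x) = model_inv (\<phi> x)" for x y
    using hom_mult[of x y] hom_inv[of x] by simp_all
  have "bij \<phi>"
    using assms by (simp add: iso_def)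
  define commutes where "commutes g h \<longleftrightarrow> model_mult g (model_mult (model_mult h g) (model_inv h)) =
      model_mult (model_mult (model_mult h g) (model_inv h)) g" for g h
  have "commutes (\<phi> g) (\<phi> h) \<longleftrightarrow> commutes g h" for h
    unfolding commutes_def hom[symmetric] inv[symmetric] using bij_is_inj[OF \<open>bij \<phi>\<close>] by (simp add: inj_eq)
  moreover have "(\<forall>h. commutes (\<phi> g) h) \<longleftrightarrow> (\<forall>h. commutes (\<phi> g) (\<phi> h))"
    using bij_is_surj[OF \<open>bij \<phi>\<close>] by (metis surjD)
  ultimately show ?thesis
    using translation_iff_commutes_with_conjugates[of g] translation_iff_commutes_with_conjugates[of "\<phi> g"]
    unfolding commutes_def by (metis (full_types))
qed

lemma aut_Model_eq_affine_aut:
  assumes \<phi>: "\<phi> \<in> iso Model Model"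
  obtains a b c mu nu e d where "\<phi> = affine_aut a b c mu nu e d"
proof -
  interpret group_hom Model Model \<phi>
    using \<phi> group_Model by (simp add: group_hom_def group_hom_axioms_def iso_def)
  have hom: "\<phi> (model_mult x y) = model_mult (\<phi> x) (\<phi> y)" for x y
    using hom_mult[of x y] by simp
  define f where "f z = fst (\<phi> (z, False))" for z
  define d0 where "d0 = fst (\<phi> (0, True))"
  have \<phi>_False: "\<phi> (z, False) = (f z, False)" for z
    using aut_Model_preserves_translations[OF \<phi>, of "(z, False)"] unfolding f_def by (metis prod.collapse snd_conv)
  have \<phi>_True0: "\<phi> (0, True) = (d0, True)"
    using aut_Model_preserves_translations[OF \<phi>, of "(0, True)"] unfolding d0_def by (metis prod.collapse snd_conv)
  have add: "f (x + y) = f x + f y" for x y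
    using hom[of "(x, False)" "(y, False)"] by (simp add: model_mult_def \<phi>_False)
  have \<phi>_True: "\<phi> (z, True) = (f z + d0, True)" for z
    using hom[of "(z, False)" "(0, True)"] by (simp add: model_mult_def \<phi>_False \<phi>_True0)
  have f_sigma0: "f (sigma z) = d0 + sigma (f z) + sigma d0" for z
    using hom[of "model_mult (0, True) (z, False)" "(0, True)"] hom[of "(0, True)" "(z, False)"]
    by (simp add: model_mult_def \<phi>_False \<phi>_True0)
  have "f 0 = 0"
    using add[of 0 0] by simp
  then have d0_sigma: "d0 + sigma d0 = 0"
    using f_sigma0[of 0] by simp
  then have f_sigma: "f (sigma z) = sigma (f z)" for z
    using f_sigma0[of z] by (simp add: algebra_simps)
  obtain m11 m12 m13 m21 m22 m23 m31 m32 m33 where f: "\<And>u w t. f (u, w, t) =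
      (m11 * u + m12 * w + m13 * t, m21 * u + m22 * w + m23 * t, m31 * u + m32 * w + m33 * t)"
    using additive_int3_linear[of f] add by blast
  have "m13 = 0" "m23 = 0" "m33 = m11 + 2 * m31" "m12 = - 2 * m32"
    using f_sigma[of "(1, 0, 0)"] f_sigma[of "(0, 1, 0)"] by (simp_all add: f)
  then have "f = lin m33 m31 m32 m21 m22"
    by (intro ext) (auto simp: f algebra_simps)
  moreover obtain d1 d2 d3 where "d0 = (d1, d2, d3)"
    by (cases d0)
  then have "d0 = shift d3 d2"
    using d0_sigma by (simp add: shift_def zero_prod_def)
  ultimately have "\<phi> = affine_aut m33 m31 m32 m21 m22 d3 d2"
    by (intro ext) (auto simp: affine_aut_def \<phi>_False \<phi>_True)
  then show thesis
    by (rule that)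
qed

lemma lin_surj_coeffs:
  assumes "surj (lin a b c mu nu)"
  shows "(a = 1 \<or> a = -1) \<and> ((a - 2 * b) * nu + 2 * c * mu = 1 \<or> (a - 2 * b) * nu + 2 * c * mu = -1)"
proof -
  obtain u1 w1 t1 u2 w2 t2 u3 w3 t3 where "lin a b c mu nu (u1, w1, t1) = (1, 0, 0)"
    "lin a b c mu nu (u2, w2, t2) = (0, 1, 0)" "lin a b c mu nu (u3, w3, t3) = (0, 0, 1)"
    using assms by (metis prod_cases3 surjD)
  then have e1: "(a - 2 * b) * u1 - 2 * c * w1 = 1" "mu * u1 + nu * w1 = 0"
    and e2: "(a - 2 * b) * u2 - 2 * c * w2 = 0" "mu * u2 + nu * w2 = 1"
    and e3: "(a - 2 * b) * u3 - 2 * c * w3 = 0" "mu * u3 + nu * w3 = 0" "b * u3 + c * w3 + a * t3 = 1"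
    by simp_all
  define q where "q = (a - 2 * b) * nu + 2 * c * mu"
  have "q * (u1 * w2 - u2 * w1) = ((a - 2 * b) * u1 - 2 * c * w1) * (mu * u2 + nu * w2) -
      ((a - 2 * b) * u2 - 2 * c * w2) * (mu * u1 + nu * w1)"
    unfolding q_def by (simp add: algebra_simps)
  then have "q * (u1 * w2 - u2 * w1) = 1"
    using e1 e2 by simp
  then have q: "q = 1 \<or> q = -1"
    using zmult_eq_1_iff by blast
  have "q * u3 = nu * ((a - 2 * b) * u3 - 2 * c * w3) + 2 * c * (mu * u3 + nu * w3)"
    "q * w3 = (a - 2 * b) * (mu * u3 + nu * w3) - mu * ((a - 2 * b) * u3 - 2 * c * w3)"
    unfolding q_def by (simp_all add: algebra_simps)
  then have "u3 = 0" "w3 = 0"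
    using e3 q by auto
  then have "a * t3 = 1"
    using e3 by simp
  then show ?thesis
    using q zmult_eq_1_iff unfolding q_def by blast
qed

lemma lin_surj_if_affine_aut_surj:
  assumes "surj (affine_aut a b c mu nu e d)"
  shows "surj (lin a b c mu nu)"
proof -
  have "y \<in> range (lin a b c mu nu)" for y
  proof -
    obtain g where "affine_aut a b c mu nu e d g = (y, False)"
      using assms by (metis surjD)
    then show ?thesis
      by (cases g) (auto simp: affine_aut_def split: if_splits)
  qed
  then show ?thesis
    by blast
qed

section \<open>The Reidemeister spectrum of the model\<close>

lemma four_dvd_abs_add_abs:
  fixes q m :: int
  assumes "q = 1 \<or> q = -1"
  shows "4 dvd \<bar>q + 1 - 2 * m\<bar> + \<bar>q + 1 + 2 * m\<bar>"
  using assms by (cases "m \<ge> 1"; cases "m \<le> -1"; cases "m = 0") (auto simp: abs_if; presburger)+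

lemma reidemeister_number_aut_Model:
  assumes "\<phi> \<in> iso Model Model"
  shows "reidemeister_number Model \<phi> \<in> {enat n | n. n > 0 \<and> 4 dvd n} \<union> {\<infinity>}"
proof -
  obtain a b c mu nu e d where \<phi>: "\<phi> = affine_aut a b c mu nu e d"
    using aut_Model_eq_affine_aut[OF assms] .
  define q where "q = (a - 2 * b) * nu + 2 * c * mu"
  have "surj \<phi>"
    using assms by (simp add: iso_def bij_is_surj)
  then have a: "a = 1 \<or> a = -1" and q: "q = 1 \<or> q = -1"
    using lin_surj_coeffs[OF lin_surj_if_affine_aut_surj] unfolding \<phi> q_def by blast+
  show ?thesis
  proof (cases "a = 1")
    case True
    then show ?thesis
      unfolding \<phi> by (simp add: reidemeister_number_preserving)
  next
    case False
    then have "a = -1"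
      using a by simp
    moreover have "odd q"
      using q by auto
    then have "odd nu"
      unfolding q_def \<open>a = -1\<close> by simp
    then obtain n where nu: "nu = 2 * n + 1"
      by (blast elim: oddE)
    define D0 where "D0 = - 4 * n * (1 + b) + 2 * c * mu"
    define D1 where "D1 = - 4 * b * (n + 1) + 2 * c * mu"
    show ?thesis
    proof (cases "D0 = 0 \<or> D1 = 0")
      case True
      then show ?thesis
        unfolding \<phi> \<open>a = -1\<close> nu D0_def D1_def by (simp add: reidemeister_number_reversing_infinite)
    next
      case False
      define k :: nat where "k = nat \<bar>D0\<bar> + nat \<bar>D1\<bar> + (if even d then 4 else 0)"
      have "reidemeister_number Model \<phi> = enat k"
        using False reidemeister_number_reversing_finite
        unfolding \<phi> \<open>a = -1\<close> nu k_def D0_def D1_def by blast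
      moreover have "D0 = q + 1 - 2 * (n - b)" "D1 = q + 1 + 2 * (n - b)"
        unfolding D0_def D1_def q_def \<open>a = -1\<close> nu by (simp_all add: algebra_simps)
      then have "4 dvd int k"
        unfolding k_def using four_dvd_abs_add_abs[OF q, of "n - b"] by auto
      moreover have "k > 0"
        unfolding k_def using False by simp
      ultimately show ?thesis
        by (simp add: flip: int_dvd_int_iff)
    qed
  qed
qed

lemma affine_aut_id: "affine_aut 1 0 0 0 1 0 0 = (\<lambda>g. g)"
  by (intro ext) (auto simp: affine_aut_def shift_def zero_prod_def)

text \<open>\<open>affine_aut (-1) (- k) (- k) 1 1 0 1\<close> has Reidemeister number \<open>4 * k\<close>.\<close>

lemma affine_aut_example_iso: "affine_aut (-1) (- k) (- k) 1 1 0 1 \<in> iso Model Model"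
proof -
  define \<psi> :: "elt \<Rightarrow> elt" where "\<psi> = (\<lambda>((u, w, t), E).
    (let w' = w - (if E then 1 else 0); u' = - u + 2 * k * w'; w'' = u + (1 - 2 * k) * w'
     in (u', w'', - t - k * u' - k * w''), E))"
  have "\<psi> (affine_aut (-1) (- k) (- k) 1 1 0 1 g) = g \<and> affine_aut (-1) (- k) (- k) 1 1 0 1 (\<psi> g) = g" for g
  proof -
    obtain u w t E where "g = ((u, w, t), E)"
      by (metis prod.collapse)
    then show ?thesis
      by (cases E) (simp_all add: \<psi>_def affine_aut_def shift_def Let_def algebra_simps)
  qed
  then have "bij (affine_aut (-1) (- k) (- k) 1 1 0 1)"
    by (intro o_bij[of \<psi>]) auto
  then show ?thesis
    using affine_aut_hom by (simp add: iso_def)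
qed

theorem reidemeister_spectrum_Model:
  "reidemeister_spectrum Model = {enat n | n. n > 0 \<and> 4 dvd n} \<union> {\<infinity>}"
proof (intro equalityI subsetI)
  fix x assume "x \<in> reidemeister_spectrum Model"
  then obtain \<phi> where "\<phi> \<in> iso Model Model" "x = reidemeister_number Model \<phi>"
    unfolding reidemeister_spectrum_def by blast
  then show "x \<in> {enat n | n. n > 0 \<and> 4 dvd n} \<union> {\<infinity>}"
    using reidemeister_number_aut_Model by simp
next
  fix x assume "x \<in> {enat n | n. n > 0 \<and> 4 dvd n} \<union> {\<infinity>}"
  then consider "x = \<infinity>" | k where "x = enat (4 * k)" "k > 0"
    by fastforce
  then show "x \<in> reidemeister_spectrum Model"
  proof cases
    case 1
    have "\<infinity> = reidemeister_number Model (\<lambda>g. g)"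
      using reidemeister_number_preserving[of 0 0 0 1 0 0] by (simp add: affine_aut_id)
    then show ?thesis
      unfolding reidemeister_spectrum_def 1 using iso_set_refl[of Model] by blast
  next
    case 2
    have "reidemeister_number Model (affine_aut (-1) (- int k) (- int k) 1 1 0 1) = x"
      using reidemeister_number_reversing_finite[of 0 "- int k" "- int k" 1 0 1] 2 by simp
    then show ?thesis
      unfolding reidemeister_spectrum_def using affine_aut_example_iso by blast
  qed
qed

section \<open>The model is isomorphic to \<open>\<Gamma>\<close>\<close>

lemma Aff3_simps [simp]:
  "carrier Aff3 = {p. invertible (snd p)}" "mult Aff3 = aff_mult" "one Aff3 = (0, mat 1)"
  by (simp_all add: Aff3_def)

lemma invertible_mat_one: "invertible (mat 1 :: real^'n^'n)"
  unfolding invertible_def by (intro exI[of _ "mat 1"]) simp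

lemma group_Aff3: "group Aff3"
proof (rule groupI)
  fix x y z
  assume "x \<in> carrier Aff3" "y \<in> carrier Aff3" "z \<in> carrier Aff3"
  then show "x \<otimes>\<^bsub>Aff3\<^esub> y \<in> carrier Aff3"
    by (simp add: aff_mult_def invertible_mult)
  show "x \<otimes>\<^bsub>Aff3\<^esub> y \<otimes>\<^bsub>Aff3\<^esub> z = x \<otimes>\<^bsub>Aff3\<^esub> (y \<otimes>\<^bsub>Aff3\<^esub> z)"
    by (simp add: aff_mult_def matrix_vector_right_distrib matrix_vector_mul_assoc matrix_mul_assoc add.assoc)
next
  fix x
  assume "x \<in> carrier Aff3"
  then obtain X' where X': "snd x ** X' = mat 1" "X' ** snd x = mat 1"
    by (auto simp: invertible_def)
  then have "invertible X'" "aff_mult (- (X' *v fst x), X') x = (0, mat 1)"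
    unfolding invertible_def by (auto simp: aff_mult_def matrix_vector_mul_assoc)
  then show "\<exists>y \<in> carrier Aff3. y \<otimes>\<^bsub>Aff3\<^esub> x = \<one>\<^bsub>Aff3\<^esub>"
    by (intro bexI[of _ "(- (X' *v fst x), X')"]) auto
qed (simp_all add: aff_mult_def invertible_mat_one)

text \<open>The coordinates \<open>(u, w, t) \<mapsto> (- t, u, w)\<close> turn \<open>sigma\<close> into \<open>A_mat\<close>
  (\<open>A_mat_coord_vec\<close>), so \<open>Model\<close> is \<open>\<Gamma>\<close> written in these coordinates.\<close>

definition coord_vec :: "int \<times> int \<times> int \<Rightarrow> real^3" where
  "coord_vec = (\<lambda>(u, w, t). vector [- real_of_int t, real_of_int u, real_of_int w])"

definition model_to_Aff3 :: "elt \<Rightarrow> (real^3) \<times> (real^3^3)" where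
  "model_to_Aff3 g = (coord_vec (fst g), if snd g then A_mat else mat 1)"

lemma coord_vec_nth:
  "coord_vec (u, w, t) $ 1 = - real_of_int t" "coord_vec (u, w, t) $ 2 = real_of_int u"
  "coord_vec (u, w, t) $ 3 = real_of_int w"
  by (simp_all add: coord_vec_def)

lemma coord_vec_add: "coord_vec (x + y) = coord_vec x + coord_vec y"
  by (cases x, cases y) (simp add: vec_eq_iff forall_3 coord_vec_nth)

lemma coord_vec_zero: "coord_vec 0 = 0"
  by (simp add: vec_eq_iff forall_3 coord_vec_def zero_prod_def)

lemma coord_vec_inj: "inj coord_vec"
proof (rule injI)
  fix z z' :: "int \<times> int \<times> int"
  assume "coord_vec z = coord_vec z'"
  then have "coord_vec z $ i = coord_vec z' $ i" for i
    by simp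
  then show "z = z'"
    by (cases z, cases z') (metis coord_vec_nth of_int_eq_iff neg_equal_iff_equal)
qed

lemma A_mat_nth:
  "A_mat $ 1 $ 1 = 1" "A_mat $ 1 $ 2 = -1" "A_mat $ 1 $ 3 = 0"
  "A_mat $ 2 $ 1 = 0" "A_mat $ 2 $ 2 = -1" "A_mat $ 2 $ 3 = 0"
  "A_mat $ 3 $ 1 = 0" "A_mat $ 3 $ 2 = 0" "A_mat $ 3 $ 3 = -1"
  by (simp_all add: A_mat_def)

lemma A_mat_coord_vec: "A_mat *v coord_vec z = coord_vec (sigma z)"
  by (cases z) (simp add: vec_eq_iff forall_3 coord_vec_nth matrix_vector_mult_def sum_3 A_mat_nth)

lemma A_mat_squared: "A_mat ** A_mat = mat 1"
  by (simp add: vec_eq_iff forall_3 matrix_matrix_mult_def sum_3 A_mat_nth mat_def)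

lemma A_mat_neq_one: "A_mat \<noteq> mat 1"
proof
  assume "A_mat = mat 1"
  then have "A_mat $ 2 $ 2 = (mat 1 :: real^3^3) $ 2 $ 2"
    by simp
  then show False
    by (simp add: A_mat_nth mat_def)
qed

lemma model_to_Aff3_mult: "model_to_Aff3 (model_mult g h) = aff_mult (model_to_Aff3 g) (model_to_Aff3 h)"
  by (cases "snd g"; cases "snd h")
    (simp_all add: model_to_Aff3_def model_mult_def aff_mult_def coord_vec_add A_mat_coord_vec A_mat_squared)

lemma inj_model_to_Aff3: "inj model_to_Aff3"
  unfolding model_to_Aff3_def using coord_vec_inj A_mat_neq_one
  by (intro injI) (auto simp: prod_eq_iff inj_eq split: if_splits)

lemma model_to_Aff3_in_carrier: "model_to_Aff3 g \<in> carrier Aff3"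
  using A_mat_squared by (auto simp: model_to_Aff3_def invertible_mat_one invertible_def)

lemma model_to_Aff3_one: "model_to_Aff3 (0, False) = \<one>\<^bsub>Aff3\<^esub>"
  by (simp add: model_to_Aff3_def coord_vec_zero)

lemma model_to_Aff3_inv: "inv\<^bsub>Aff3\<^esub> (model_to_Aff3 g) = model_to_Aff3 (model_inv g)"
proof (rule group.inv_equality[OF group_Aff3 _ model_to_Aff3_in_carrier model_to_Aff3_in_carrier])
  have "model_mult (model_inv g) g = (0, False)"
    by (cases g) (auto simp: model_mult_def model_inv_def sigma_uminus)
  then show "model_to_Aff3 (model_inv g) \<otimes>\<^bsub>Aff3\<^esub> model_to_Aff3 g = \<one>\<^bsub>Aff3\<^esub>"
    using model_to_Aff3_mult[of "model_inv g" g] model_to_Aff3_one by simp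
qed

lemma Z3_eq_translations: "Z3 = (\<lambda>z. model_to_Aff3 (z, False)) ` UNIV"
proof (intro equalityI subsetI)
  fix x assume "x \<in> Z3"
  then obtain z :: "3 \<Rightarrow> int" where "x = ((\<chi> i. of_int (z i)), mat 1)"
    unfolding Z3_def by blast
  then have "x = model_to_Aff3 ((z 2, z 3, - z 1), False)"
    unfolding model_to_Aff3_def by (simp add: vec_eq_iff forall_3 coord_vec_nth)
  then show "x \<in> (\<lambda>z. model_to_Aff3 (z, False)) ` UNIV"
    by blast
next
  fix x assume "x \<in> (\<lambda>z. model_to_Aff3 (z, False)) ` UNIV"
  then obtain u w t where "x = model_to_Aff3 ((u, w, t), False)"
    by auto
  then have "x = ((\<chi> i. of_int ((\<lambda>i :: 3. if i = 1 then - t else if i = 2 then u else w) i)), mat 1)"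
    unfolding model_to_Aff3_def by (simp add: vec_eq_iff forall_3 coord_vec_nth)
  then show "x \<in> Z3"
    unfolding Z3_def by (intro CollectI exI[of _ "\<lambda>i :: 3. if i = 1 then - t else if i = 2 then u else w"]) simp
qed

lemma generators_Gamma_eq: "Z3 \<union> {(0, A_mat)} = (\<lambda>z. model_to_Aff3 (z, False)) ` UNIV \<union> {model_to_Aff3 (0, True)}"
  unfolding Z3_eq_translations by (simp add: model_to_Aff3_def coord_vec_zero)

lemma carrier_Gamma: "carrier Gamma = range model_to_Aff3"
proof
  show "carrier Gamma \<subseteq> range model_to_Aff3"
  proof
    fix x assume "x \<in> carrier Gamma"
    then have "x \<in> generate Aff3 (Z3 \<union> {(0, A_mat)})"
      by (simp add: Gamma_def)
    then show "x \<in> range model_to_Aff3"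
    proof (induction rule: generate.induct)
      case one
      show ?case using model_to_Aff3_one by (metis rangeI)
    next
      case (incl h)
      then show ?case using generators_Gamma_eq by blast
    next
      case (inv h)
      then obtain g where "h = model_to_Aff3 g"
        using generators_Gamma_eq by blast
      then show ?case
        using model_to_Aff3_inv by simp
    next
      case (eng h1 h2)
      then obtain g1 g2 where "h1 = model_to_Aff3 g1" "h2 = model_to_Aff3 g2"
        by blast
      then show ?case
        using model_to_Aff3_mult[of g1 g2, symmetric] by simp
    qed
  qed
  show "range model_to_Aff3 \<subseteq> carrier Gamma"
  proof
    fix x assume "x \<in> range model_to_Aff3"
    then obtain z E where x: "x = model_to_Aff3 (z, E)"
      by auto
    have translation: "model_to_Aff3 (z, False) \<in> generate Aff3 (Z3 \<union> {(0, A_mat)})"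
      and reflection: "model_to_Aff3 (0, True) \<in> generate Aff3 (Z3 \<union> {(0, A_mat)})"
      unfolding generators_Gamma_eq by (auto intro: generate.incl)
    have "model_to_Aff3 (z, True) = model_to_Aff3 (z, False) \<otimes>\<^bsub>Aff3\<^esub> model_to_Aff3 (0, True)"
      using model_to_Aff3_mult[of "(z, False)" "(0, True)"] by (simp add: model_mult_def)
    then have "model_to_Aff3 (z, True) \<in> generate Aff3 (Z3 \<union> {(0, A_mat)})"
      using generate.eng[OF translation reflection] by simp
    then show "x \<in> carrier Gamma"
      unfolding x Gamma_def using translation by (cases E) simp_all
  qed
qed

lemma group_Gamma: "group Gamma"
proof -
  have "Z3 \<union> {(0, A_mat)} \<subseteq> carrier Aff3"
    unfolding generators_Gamma_eq using model_to_Aff3_in_carrier by blast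
  then have "subgroup (generate Aff3 (Z3 \<union> {(0, A_mat)})) Aff3"
    by (rule group.generate_is_subgroup[OF group_Aff3])
  then show ?thesis
    unfolding Gamma_def by (rule subgroup.subgroup_is_group[OF _ group_Aff3])
qed

lemma model_to_Aff3_iso: "model_to_Aff3 \<in> iso Model Gamma"
proof (rule isoI)
  show "model_to_Aff3 \<in> hom Model Gamma"
    unfolding hom_def using carrier_Gamma model_to_Aff3_mult by (auto simp: Gamma_def)
  show "bij_betw model_to_Aff3 (carrier Model) (carrier Gamma)"
    using inj_model_to_Aff3 carrier_Gamma by (simp add: bij_betw_def)
qed

theorem proposition5p13:
  shows "reidemeister_spectrum Gamma = {enat n | n. n > 0 \<and> 4 dvd n} \<union> {\<infinity>}"
  using reidemeister_spectrum_iso_eq[OF group_Model group_Gamma model_to_Aff3_iso] reidemeister_spectrum_Model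
  by simp

end
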